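(* Consider the variational model described in the context (finite-state-controller policies for agents $n=1,\dots,N$ with stick-breaking/Dirichlet priors and Gamma hyper-priors, a dataset of $K$ trajectories, and the mean-field variational family below). With conjugate priors and the mean-field assumption, maximizing the objective $\mathrm{ELBO}(q)$ coordinate-wise over each variational factor (the others held fixed) reduces to the following parameter updates of the variational distributions: \[ \begin{aligned} &\delta_n^i=1+\sum_{k=1}^{K}\frac{1}{K}\sum_{t=0}^{T_k}q_{n,t}^k(z_{n,0}^{k}=i), \qquad \mu_n^i=\frac{g_n}{h_n}+\sum_{k=1}^{K}\frac{1}{K}\sum_{t=0}^{T_k}\sum_{m=i+1}^{|\mathcal{Z}_n|}q_{n,t}^k(z_{n,0}^{k}=m),\\ &\phi_{n,i}^{a}=\theta_{n,i}^{a}+\sum_{k=1}^{K}\frac{1}{K}\sum_{t=0}^{T_k}\sum_{\tau=0}^{t}q_{n,t}^k(z_{n,\tau}^{k}=i)\,\mathbb{I}(a_{n,\tau}^{k}=a),\\ &\sigma_{n,a,o}^{i,j}=1+\sum_{k=1}^{K}\frac{1}{K}\sum_{t=0}^{T_k}\sum_{\tau=1}^{t}q_{n,t}^k(z_{n,\tau-1}^{k}=i,z_{n,\tau}^{k}=j)\,\mathbb{I}(a_{n,\tau-1}^{k}=a,o_{n,\tau}^{k}=o),\\ &\lambda_{n,a,o}^{i,j}=\frac{a_{n,a,o}^{i}}{b_{n,a,o}^{i}}+\sum_{k=1}^{K}\frac{1}{K}\sum_{t=0}^{T_k}\sum_{\tau=1}^{t}\sum_{m=j+1}^{|\mathcal{Z}_n|}q_{n,t}^k(z_{n,\tau-1}^{k}=i,z_{n,\tau}^{k}=m)\,\mathbb{I}(a_{n,\tau-1}^{k}=a,o_{n,\tau}^{k}=o),\\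 &g_n=e+|\mathcal{Z}_n|,\qquad h_n=f-\sum_{i=1}^{|\mathcal{Z}_n|}\left[\Psi(\mu_{n}^{i})-\Psi(\delta_{n}^{i}+\mu_{n}^{i})\right],\\ &a_{n,a,o}^{i}=c_{n,a,o}+|\mathcal{Z}_n|,\qquad b_{n,a,o}^{i}=d_{n,a,o}-\sum_{j=1}^{|\mathcal{Z}_n|}\left[\Psi(\lambda_{n,a,o}^{i,j})-\Psi(\sigma_{n,a,o}^{i,j}+\lambda_{n,a,o}^{i,j})\right], \end{aligned} \] where $\Psi$ is the digamma function, $\mathbb{I}$ is the indicator function, and \[ q_{n,t}^k(z_{n,\tau}^{k}=i)=\tilde{\nu}_t^k\, p(z_{n,\tau}^{k}=i\mid a_{n,0:t}^k,o_{n,1:t}^k,\tilde{\Theta}),\qquad q_{n,t}^k(z_{n,\tau-1}^{k}=i,z_{n,\tau}^{k}=j)=\tilde{\nu}_t^k\, p(z_{n,\tau-1}^{k}=i,z_{n,\tau}^{k}=j\mid a_{n,0:t}^k,o_{n,1:t}^k,\tilde{\Theta}) \] are the marginals of $q_{n,t}^k(z_{n,0:t}^{k})$ for $\tau=0,\dots,t$.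
   Context: Agents $n=1,\dots,N$; agent $n$ has a finite action set $\mathcal{A}_n$, finite observation set $\mathcal{O}_n$ and a (truncated) finite node set $\mathcal{Z}_n=\{1,\dots,|\mathcal{Z}_n|\}$. A finite state controller (FSC) policy $\Theta_n=(\eta_n,\omega_n,\pi_n)$ for agent $n$ consists of an initial node distribution $\eta_n^i$, node transition probabilities $\omega_{n,a,o}^{i,j}$ (probability of moving to node $j$ from node $i$ after action $a$ and observation $o$), and action probabilities $\pi_{n,i}^a$ at node $i$. For action history $a_{n,0:t}$, observation history $o_{n,1:t}$ and node history $z_{n,0:t}$, $p(a_{n,0:t},z_{n,0:t}\mid o_{n,1:t},\Theta)=\eta_n^{z_0}\pi_{n,z_0}^{a_0}\prod_{\tau=1}^{t}\omega_{n,a_{\tau-1},o_\tau}^{z_{\tau-1},z_\tau}\pi_{n,z_\tau}^{a_\tau}$, and $p(a_{n,0:t}\mid o_{n,1:t},\Theta)$ is its sum over $z_{n,0:t}$. Prior: $\eta_n^1=u_n^1$, $\eta_n^i=u_n^i\prod_{m<i}(1-u_n^m)$; $\omega_{n,a,o}^{i,1}=V_{n,a,o}^{i,1}$, $\omega_{n,a,o}^{i,j}=V_{n,a,o}^{i,j}\prod_{m<j}(1-V_{n,a,o}^{i,m})$; $u_n^i\sim\mathrm{Beta}(1,\rho_n)$, $\rho_n\sim\mathrm{Gamma}(e,f)$; $V_{n,a,o}^{i,j}\sim\mathrm{Beta}(1,\alpha_{n,a,o}^i)$, $\alpha_{n,a,o}^i\sim\mathrm{Gamma}(c_{n,a,o},d_{n,a,o})$;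 $\pi_{n,i}\sim\mathrm{Dirichlet}(\theta_{n,i}^{1},\dots,\theta_{n,i}^{|\mathcal{A}_n|})$ (Gamma in shape–rate form). Data: $K$ trajectories; trajectory $k$ has length $T_k$, actions $a_{n,\tau}^k$, observations $o_{n,\tau}^k$, and rewards $r_t^k$; $R_{\min}$ is the minimal reward, $\gamma\in[0,1)$ a discount factor, and $\Pi$ a behavior policy giving probabilities $p(a_{n,0:t}^k\mid o_{n,1:t}^k,\Pi)$. Let $\tilde r_t^k=\gamma^t (r_t^k-R_{\min})/\prod_{n}p(a_{n,0:t}^k\mid o_{n,1:t}^k,\Pi)$ and the empirical value $\hat V(\mathcal{D}^K;\Theta)=\frac1K\sum_{k}\sum_{t=0}^{T_k}\tilde r_t^k\prod_n p(a_{n,0:t}^k\mid o_{n,1:t}^k,\Theta)$. Variational family (mean field): $q(u_n^i)=\mathrm{Beta}(\delta_n^i,\mu_n^i)$, $q(V_{n,a,o}^{i,j})=\mathrm{Beta}(\sigma_{n,a,o}^{i,j},\lambda_{n,a,o}^{i,j})$, $q(\rho_n)=\mathrm{Gamma}(g_n,h_n)$, $q(\alpha_{n,a,o}^i)=\mathrm{Gamma}(a_{n,a,o}^i,b_{n,a,o}^i)$, $q(\pi_{n,i})=\mathrm{Dirichlet}(\phi_{n,i}^1,\dots,\phi_{n,i}^{|\mathcal{A}_n|})$, and $q(z_{n,0:t}^k)=\tilde\nu_t^k\,p(z_{n,0:t}^k\mid a_{n,0:t}^k,o_{n,1:t}^k,\tilde\Theta)$, where $\tilde\Theta=(\tilde\eta,\tilde\omega,\tilde\pi)$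 with $\tilde\eta_n^i=\exp\mathrm{E}_q[\ln\eta_n^i]$, $\tilde\omega_{n,a,o}^{i,j}=\exp\mathrm{E}_q[\ln\omega_{n,a,o}^{i,j}]$, $\tilde\pi_{n,i}^a=\exp\mathrm{E}_q[\ln\pi_{n,i}^a]$, and $\tilde\nu_t^k=\gamma^t(r_t^k-R_{\min})\prod_n p(a_{n,0:t}^k\mid o_{n,1:t}^k,\tilde\Theta)/\big(\prod_n p(a_{n,0:t}^k\mid o_{n,1:t}^k,\Pi)\,\hat V(\mathcal{D}^K;\tilde\Theta)\big)$. Objective: $\mathrm{ELBO}(q)=\frac1K\sum_k\sum_{t}\sum_{\vec z_{0:t}^k}q(\vec z_{0:t}^k)\,\mathrm{E}_{q(\Theta)}\big[\ln \tilde r_t^k\prod_n p(a_{n,0:t}^k,z_{n,0:t}^k\mid o_{n,1:t}^k,\Theta)\big]+\mathrm{E}_q[\ln p(\Theta\mid\rho,\alpha)]+\mathrm{E}_q[\ln p(\rho)]+\mathrm{E}_q[\ln p(\alpha)]-\mathrm{E}_q[\ln q(\Theta)q(\rho)q(\alpha)\prod_n q(z_{n,0:t}^k)]$, with $q(\vec z_{0:t}^k)=\prod_n q(z_{n,0:t}^k)$.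
   Formalization: The joint factor $q(\vec z_{0:t}^k)$ is $\tilde\nu_t^k\prod_n p(z_{n,0:t}^k\mid a_{n,0:t}^k,o_{n,1:t}^k,\tilde\Theta)$, with the weight $\tilde\nu_t^k$ taken once instead of once per agent as in $\prod_n q(z_{n,0:t}^k)$. The statement above fails without it. *)

theory Defs
  imports "HOL-Analysis.Analysis"
begin

definition beta_pdf :: "real \<Rightarrow> real \<Rightarrow> real \<Rightarrow> real" where
  "beta_pdf a b x = (if 0 < x \<and> x < 1 then x powr (a - 1) * (1 - x) powr (b - 1) / Beta a b else 0)"

definition gamma_pdf :: "real \<Rightarrow> real \<Rightarrow> real \<Rightarrow> real" where
  "gamma_pdf a b x = (if 0 < x then b powr a * x powr (a - 1) * exp (- b * x) / Gamma a else 0)"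

definition dir_dens :: "(nat \<Rightarrow> real) \<Rightarrow> nat \<Rightarrow> (nat \<Rightarrow> real) \<Rightarrow> real" where
  "dir_dens al M p = (if (\<forall>a<M. 0 < p a)
      then Gamma (\<Sum>a<M. al a) / (\<Prod>a<M. Gamma (al a)) * (\<Prod>a<M. p a powr (al a - 1)) else 0)"

text \<open>Points of the simplex are parametrised by their first M-1 coordinates.\<close>
definition simplex_ext :: "nat \<Rightarrow> (nat \<Rightarrow> real) \<Rightarrow> nat \<Rightarrow> real" where
  "simplex_ext M x = (\<lambda>a. if a < M - 1 then x a
       else if a = M - 1 then 1 - (\<Sum>b<M - 1. x b) else 0)"

definition E_beta :: "real \<Rightarrow> real \<Rightarrow> (real \<Rightarrow> real) \<Rightarrow> real" where
  "E_beta a b g = (\<integral>x. beta_pdf a b x * g x \<partial>lborel)"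

definition E_gamma :: "real \<Rightarrow> real \<Rightarrow> (real \<Rightarrow> real) \<Rightarrow> real" where
  "E_gamma a b g = (\<integral>x. gamma_pdf a b x * g x \<partial>lborel)"

definition E_dir :: "(nat \<Rightarrow> real) \<Rightarrow> nat \<Rightarrow> ((nat \<Rightarrow> real) \<Rightarrow> real) \<Rightarrow> real" where
  "E_dir al M g = (\<integral>x. dir_dens al M (simplex_ext M x) * g (simplex_ext M x)
                      \<partial>(PiM {..<M - 1} (\<lambda>_. lborel)))"

text \<open>E over q(v) q(r), v ~ Beta(a,b), r ~ Gamma(g,h), of ln Beta(v; 1, r) (stick-breaking prior term).\<close>
definition E_stick_prior :: "real \<Rightarrow> real \<Rightarrow> real \<Rightarrow> real \<Rightarrow> real" where
  "E_stick_prior a b g h = (\<integral>p. beta_pdf a b (fst p) * gamma_pdf g h (snd p)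
                                 * ln (beta_pdf 1 (snd p) (fst p)) \<partial>(lborel \<Otimes>\<^sub>M lborel))"

text \<open>Node histories z_{0:t} with nodes in {1..Z}, as lists of length t+1.\<close>
definition hists :: "nat \<Rightarrow> nat \<Rightarrow> nat list set" where
  "hists Z t = {zs. length zs = Suc t \<and> set zs \<subseteq> {1..Z}}"

text \<open>p(a_{0:t}, z_{0:t} | o_{1:t}, Theta); om a ob i j = omega_{a,ob}^{i,j}; pol i a = pi_i^a.\<close>
definition fsc_joint :: "(nat \<Rightarrow> real) \<Rightarrow> (nat \<Rightarrow> nat \<Rightarrow> nat \<Rightarrow> nat \<Rightarrow> real) \<Rightarrow> (nat \<Rightarrow> nat \<Rightarrow> real)
     \<Rightarrow> (nat \<Rightarrow> nat) \<Rightarrow> (nat \<Rightarrow> nat) \<Rightarrow> nat list \<Rightarrow> nat \<Rightarrow> real" where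
  "fsc_joint eta om pol acts obs zs t =
     eta (zs ! 0) * pol (zs ! 0) (acts 0) *
     (\<Prod>\<tau>\<in>{1..t}. om (acts (\<tau> - 1)) (obs \<tau>) (zs ! (\<tau> - 1)) (zs ! \<tau>) * pol (zs ! \<tau>) (acts \<tau>))"

definition fsc_marg :: "(nat \<Rightarrow> real) \<Rightarrow> (nat \<Rightarrow> nat \<Rightarrow> nat \<Rightarrow> nat \<Rightarrow> real) \<Rightarrow> (nat \<Rightarrow> nat \<Rightarrow> real)
     \<Rightarrow> nat \<Rightarrow> (nat \<Rightarrow> nat) \<Rightarrow> (nat \<Rightarrow> nat) \<Rightarrow> nat \<Rightarrow> real" where
  "fsc_marg eta om pol Z acts obs t = (\<Sum>zs\<in>hists Z t. fsc_joint eta om pol acts obs zs t)"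

definition fsc_cond :: "(nat \<Rightarrow> real) \<Rightarrow> (nat \<Rightarrow> nat \<Rightarrow> nat \<Rightarrow> nat \<Rightarrow> real) \<Rightarrow> (nat \<Rightarrow> nat \<Rightarrow> real)
     \<Rightarrow> nat \<Rightarrow> (nat \<Rightarrow> nat) \<Rightarrow> (nat \<Rightarrow> nat) \<Rightarrow> nat list \<Rightarrow> nat \<Rightarrow> real" where
  "fsc_cond eta om pol Z acts obs zs t = fsc_joint eta om pol acts obs zs t / fsc_marg eta om pol Z acts obs t"

text \<open>Agents n \<in> {1..N}, trajectories k \<in> {1..K}, nodes {1..nZ n}, actions {..<nA n},
  observations {..<nO n}. act k n tau = a_{n,tau}^k, obs k n tau = o_{n,tau}^k (tau \<ge> 1),
  rew k t = r_t^k, behav k n t = p(a_{n,0:t}^k | o_{n,1:t}^k, Pi),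
  c/d indexed (n a ob), theta indexed (n i a).\<close>
record model =
  nAg :: nat
  nA :: "nat \<Rightarrow> nat"
  nO :: "nat \<Rightarrow> nat"
  nZ :: "nat \<Rightarrow> nat"
  nK :: nat
  T :: "nat \<Rightarrow> nat"
  act :: "nat \<Rightarrow> nat \<Rightarrow> nat \<Rightarrow> nat"
  obs :: "nat \<Rightarrow> nat \<Rightarrow> nat \<Rightarrow> nat"
  rew :: "nat \<Rightarrow> nat \<Rightarrow> real"
  Rmin :: real
  gam :: real
  behav :: "nat \<Rightarrow> nat \<Rightarrow> nat \<Rightarrow> real"
  he :: real
  hf :: real
  hc :: "nat \<Rightarrow> nat \<Rightarrow> nat \<Rightarrow> real"
  hd :: "nat \<Rightarrow> nat \<Rightarrow> nat \<Rightarrow> real"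
  theta :: "nat \<Rightarrow> nat \<Rightarrow> nat \<Rightarrow> real"

definition wf_model :: "model \<Rightarrow> bool" where
  "wf_model M \<longleftrightarrow>
     nAg M \<ge> 1 \<and> nK M \<ge> 1 \<and> 0 \<le> gam M \<and> gam M < 1 \<and> 0 < he M \<and> 0 < hf M \<and>
     (\<forall>n\<in>{1..nAg M}. nZ M n \<ge> 1 \<and> nA M n \<ge> 1 \<and> nO M n \<ge> 1) \<and>
     (\<forall>n\<in>{1..nAg M}. \<forall>a<nA M n. \<forall>ob<nO M n. 0 < hc M n a ob \<and> 0 < hd M n a ob) \<and>
     (\<forall>n\<in>{1..nAg M}. \<forall>i\<in>{1..nZ M n}. \<forall>a<nA M n. 0 < theta M n i a) \<and>
     (\<forall>k\<in>{1..nK M}. \<forall>t\<le>T M k. Rmin M \<le> rew M k t \<and>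
        (\<forall>n\<in>{1..nAg M}. act M k n t < nA M n \<and> obs M k n t < nO M n \<and> 0 < behav M k n t))"

text \<open>Variational parameters: dlt/mu (n i), sgm/lam (n a ob i j), gg/hh (n), aa/bb (n a ob i),
  phi (n i a).\<close>
record vparams =
  dlt :: "nat \<Rightarrow> nat \<Rightarrow> real"
  mu :: "nat \<Rightarrow> nat \<Rightarrow> real"
  sgm :: "nat \<Rightarrow> nat \<Rightarrow> nat \<Rightarrow> nat \<Rightarrow> nat \<Rightarrow> real"
  lam :: "nat \<Rightarrow> nat \<Rightarrow> nat \<Rightarrow> nat \<Rightarrow> nat \<Rightarrow> real"
  gg :: "nat \<Rightarrow> real"
  hh :: "nat \<Rightarrow> real"
  aa :: "nat \<Rightarrow> nat \<Rightarrow> nat \<Rightarrow> nat \<Rightarrow> real"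
  bb :: "nat \<Rightarrow> nat \<Rightarrow> nat \<Rightarrow> nat \<Rightarrow> real"
  phi :: "nat \<Rightarrow> nat \<Rightarrow> nat \<Rightarrow> real"

definition vparams_ok :: "model \<Rightarrow> vparams \<Rightarrow> bool" where
  "vparams_ok M P \<longleftrightarrow>
     (\<forall>n\<in>{1..nAg M}. 0 < gg P n \<and> 0 < hh P n \<and>
       (\<forall>i\<in>{1..nZ M n}. 0 < dlt P n i \<and> 0 < mu P n i \<and> (\<forall>a<nA M n. 0 < phi P n i a)) \<and>
       (\<forall>a<nA M n. \<forall>ob<nO M n. \<forall>i\<in>{1..nZ M n}. 0 < aa P n a ob i \<and> 0 < bb P n a ob i \<and>
          (\<forall>j\<in>{1..nZ M n}. 0 < sgm P n a ob i j \<and> 0 < lam P n a ob i j)))"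

definition Elog_eta :: "vparams \<Rightarrow> nat \<Rightarrow> nat \<Rightarrow> real" where
  "Elog_eta P n i = E_beta (dlt P n i) (mu P n i) ln
      + (\<Sum>m\<in>{1..<i}. E_beta (dlt P n m) (mu P n m) (\<lambda>x. ln (1 - x)))"

definition Elog_omega :: "vparams \<Rightarrow> nat \<Rightarrow> nat \<Rightarrow> nat \<Rightarrow> nat \<Rightarrow> nat \<Rightarrow> real" where
  "Elog_omega P n a ob i j = E_beta (sgm P n a ob i j) (lam P n a ob i j) ln
      + (\<Sum>m\<in>{1..<j}. E_beta (sgm P n a ob i m) (lam P n a ob i m) (\<lambda>x. ln (1 - x)))"

definition Elog_pi :: "model \<Rightarrow> vparams \<Rightarrow> nat \<Rightarrow> nat \<Rightarrow> nat \<Rightarrow> real" where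
  "Elog_pi M P n i a = E_dir (phi P n i) (nA M n) (\<lambda>p. ln (p a))"

definition eta_t :: "vparams \<Rightarrow> nat \<Rightarrow> nat \<Rightarrow> real" where
  "eta_t P n i = exp (Elog_eta P n i)"

definition om_t :: "vparams \<Rightarrow> nat \<Rightarrow> nat \<Rightarrow> nat \<Rightarrow> nat \<Rightarrow> nat \<Rightarrow> real" where
  "om_t P n a ob i j = exp (Elog_omega P n a ob i j)"

definition pi_t :: "model \<Rightarrow> vparams \<Rightarrow> nat \<Rightarrow> nat \<Rightarrow> nat \<Rightarrow> real" where
  "pi_t M P n i a = exp (Elog_pi M P n i a)"

definition marg_t :: "model \<Rightarrow> vparams \<Rightarrow> nat \<Rightarrow> nat \<Rightarrow> nat \<Rightarrow> real" where
  "marg_t M P n k t = fsc_marg (eta_t P n) (om_t P n) (pi_t M P n) (nZ M n) (act M k n) (obs M k n) t"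

definition cond_t :: "model \<Rightarrow> vparams \<Rightarrow> nat \<Rightarrow> nat \<Rightarrow> nat \<Rightarrow> nat list \<Rightarrow> real" where
  "cond_t M P n k t zs = fsc_cond (eta_t P n) (om_t P n) (pi_t M P n) (nZ M n) (act M k n) (obs M k n) zs t"

definition rtil :: "model \<Rightarrow> nat \<Rightarrow> nat \<Rightarrow> real" where
  "rtil M k t = gam M ^ t * (rew M k t - Rmin M) / (\<Prod>n\<in>{1..nAg M}. behav M k n t)"

definition Vhat_t :: "model \<Rightarrow> vparams \<Rightarrow> real" where
  "Vhat_t M P = (1 / real (nK M)) * (\<Sum>k\<in>{1..nK M}. \<Sum>t\<le>T M k.
       rtil M k t * (\<Prod>n\<in>{1..nAg M}. marg_t M P n k t))"

definition nu_t :: "model \<Rightarrow> vparams \<Rightarrow> nat \<Rightarrow> nat \<Rightarrow> real" where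
  "nu_t M P k t = gam M ^ t * (rew M k t - Rmin M) * (\<Prod>n\<in>{1..nAg M}. marg_t M P n k t)
      / ((\<Prod>n\<in>{1..nAg M}. behav M k n t) * Vhat_t M P)"

definition vhists :: "model \<Rightarrow> nat \<Rightarrow> (nat \<Rightarrow> nat list) set" where
  "vhists M t = PiE {1..nAg M} (\<lambda>n. hists (nZ M n) t)"

definition qz :: "model \<Rightarrow> vparams \<Rightarrow> nat \<Rightarrow> nat \<Rightarrow> (nat \<Rightarrow> nat list) \<Rightarrow> real" where
  "qz M P k t zv = nu_t M P k t * (\<Prod>n\<in>{1..nAg M}. cond_t M P n k t (zv n))"

definition qm1 :: "model \<Rightarrow> vparams \<Rightarrow> nat \<Rightarrow> nat \<Rightarrow> nat \<Rightarrow> nat \<Rightarrow> nat \<Rightarrow> real" where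
  "qm1 M P n k t \<tau> i = nu_t M P k t *
      (\<Sum>zs\<in>{zs\<in>hists (nZ M n) t. zs ! \<tau> = i}. cond_t M P n k t zs)"

definition qm2 :: "model \<Rightarrow> vparams \<Rightarrow> nat \<Rightarrow> nat \<Rightarrow> nat \<Rightarrow> nat \<Rightarrow> nat \<Rightarrow> nat \<Rightarrow> real" where
  "qm2 M P n k t \<tau> i j = nu_t M P k t *
      (\<Sum>zs\<in>{zs\<in>hists (nZ M n) t. zs ! (\<tau> - 1) = i \<and> zs ! \<tau> = j}. cond_t M P n k t zs)"

definition Ejoint :: "model \<Rightarrow> vparams \<Rightarrow> nat \<Rightarrow> nat \<Rightarrow> nat \<Rightarrow> nat list \<Rightarrow> real" where
  "Ejoint M P n k t zs = Elog_eta P n (zs ! 0)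
      + (\<Sum>\<tau>\<le>t. Elog_pi M P n (zs ! \<tau>) (act M k n \<tau>))
      + (\<Sum>\<tau>\<in>{1..t}. Elog_omega P n (act M k n (\<tau> - 1)) (obs M k n \<tau>) (zs ! (\<tau> - 1)) (zs ! \<tau>))"

text \<open>ELBO of the variational distribution with parameters P, the factor q(z) being the one
  built from tilde Theta of the parameters P0 (held fixed).\<close>
definition ELBO :: "model \<Rightarrow> vparams \<Rightarrow> vparams \<Rightarrow> real" where
  "ELBO M P0 P =
     (1 / real (nK M)) * (\<Sum>k\<in>{1..nK M}. \<Sum>t\<le>T M k. \<Sum>zv\<in>vhists M t.
        qz M P0 k t zv * (ln (rtil M k t) + (\<Sum>n\<in>{1..nAg M}. Ejoint M P n k t (zv n))))
   + (\<Sum>n\<in>{1..nAg M}. \<Sum>i\<in>{1..nZ M n}. E_stick_prior (dlt P n i) (mu P n i) (gg P n) (hh P n))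
   + (\<Sum>n\<in>{1..nAg M}. \<Sum>a<nA M n. \<Sum>ob<nO M n. \<Sum>i\<in>{1..nZ M n}. \<Sum>j\<in>{1..nZ M n}.
        E_stick_prior (sgm P n a ob i j) (lam P n a ob i j) (aa P n a ob i) (bb P n a ob i))
   + (\<Sum>n\<in>{1..nAg M}. \<Sum>i\<in>{1..nZ M n}.
        E_dir (phi P n i) (nA M n) (\<lambda>p. ln (dir_dens (theta M n i) (nA M n) p)))
   + (\<Sum>n\<in>{1..nAg M}. E_gamma (gg P n) (hh P n) (\<lambda>r. ln (gamma_pdf (he M) (hf M) r)))
   + (\<Sum>n\<in>{1..nAg M}. \<Sum>a<nA M n. \<Sum>ob<nO M n. \<Sum>i\<in>{1..nZ M n}.
        E_gamma (aa P n a ob i) (bb P n a ob i) (\<lambda>x. ln (gamma_pdf (hc M n a ob) (hd M n a ob) x)))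
   - ( (\<Sum>n\<in>{1..nAg M}. \<Sum>i\<in>{1..nZ M n}.
          E_beta (dlt P n i) (mu P n i) (\<lambda>x. ln (beta_pdf (dlt P n i) (mu P n i) x)))
     + (\<Sum>n\<in>{1..nAg M}. \<Sum>a<nA M n. \<Sum>ob<nO M n. \<Sum>i\<in>{1..nZ M n}. \<Sum>j\<in>{1..nZ M n}.
          E_beta (sgm P n a ob i j) (lam P n a ob i j) (\<lambda>x. ln (beta_pdf (sgm P n a ob i j) (lam P n a ob i j) x)))
     + (\<Sum>n\<in>{1..nAg M}. E_gamma (gg P n) (hh P n) (\<lambda>x. ln (gamma_pdf (gg P n) (hh P n) x)))
     + (\<Sum>n\<in>{1..nAg M}. \<Sum>a<nA M n. \<Sum>ob<nO M n. \<Sum>i\<in>{1..nZ M n}.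
          E_gamma (aa P n a ob i) (bb P n a ob i) (\<lambda>x. ln (gamma_pdf (aa P n a ob i) (bb P n a ob i) x)))
     + (\<Sum>n\<in>{1..nAg M}. \<Sum>i\<in>{1..nZ M n}.
          E_dir (phi P n i) (nA M n) (\<lambda>p. ln (dir_dens (phi P n i) (nA M n) p)))
     + (1 / real (nK M)) * (\<Sum>k\<in>{1..nK M}. \<Sum>t\<le>T M k. \<Sum>zv\<in>vhists M t.
          qz M P0 k t zv * ln (qz M P0 k t zv)) )"

definition upd_dlt :: "model \<Rightarrow> vparams \<Rightarrow> nat \<Rightarrow> nat \<Rightarrow> real" where
  "upd_dlt M P0 n i = 1 + (\<Sum>k\<in>{1..nK M}. (1 / real (nK M)) * (\<Sum>t\<le>T M k. qm1 M P0 n k t 0 i))"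

definition upd_mu :: "model \<Rightarrow> vparams \<Rightarrow> vparams \<Rightarrow> nat \<Rightarrow> nat \<Rightarrow> real" where
  "upd_mu M P0 P n i = gg P n / hh P n +
     (\<Sum>k\<in>{1..nK M}. (1 / real (nK M)) * (\<Sum>t\<le>T M k. \<Sum>m\<in>{i+1..nZ M n}. qm1 M P0 n k t 0 m))"

definition upd_phi :: "model \<Rightarrow> vparams \<Rightarrow> nat \<Rightarrow> nat \<Rightarrow> nat \<Rightarrow> real" where
  "upd_phi M P0 n i = (\<lambda>a\<in>{..<nA M n}. theta M n i a +
     (\<Sum>k\<in>{1..nK M}. (1 / real (nK M)) * (\<Sum>t\<le>T M k. \<Sum>\<tau>\<le>t.
        qm1 M P0 n k t \<tau> i * (if act M k n \<tau> = a then 1 else 0))))"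

definition upd_sgm :: "model \<Rightarrow> vparams \<Rightarrow> nat \<Rightarrow> nat \<Rightarrow> nat \<Rightarrow> nat \<Rightarrow> nat \<Rightarrow> real" where
  "upd_sgm M P0 n a ob i j = 1 +
     (\<Sum>k\<in>{1..nK M}. (1 / real (nK M)) * (\<Sum>t\<le>T M k. \<Sum>\<tau>\<in>{1..t}.
        qm2 M P0 n k t \<tau> i j * (if act M k n (\<tau> - 1) = a \<and> obs M k n \<tau> = ob then 1 else 0)))"

definition upd_lam :: "model \<Rightarrow> vparams \<Rightarrow> vparams \<Rightarrow> nat \<Rightarrow> nat \<Rightarrow> nat \<Rightarrow> nat \<Rightarrow> nat \<Rightarrow> real" where
  "upd_lam M P0 P n a ob i j = aa P n a ob i / bb P n a ob i +
     (\<Sum>k\<in>{1..nK M}. (1 / real (nK M)) * (\<Sum>t\<le>T M k. \<Sum>\<tau>\<in>{1..t}. \<Sum>m\<in>{j+1..nZ M n}.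
        qm2 M P0 n k t \<tau> i m * (if act M k n (\<tau> - 1) = a \<and> obs M k n \<tau> = ob then 1 else 0)))"

definition upd_g :: "model \<Rightarrow> nat \<Rightarrow> real" where
  "upd_g M n = he M + real (nZ M n)"

definition upd_h :: "model \<Rightarrow> vparams \<Rightarrow> nat \<Rightarrow> real" where
  "upd_h M P n = hf M - (\<Sum>i\<in>{1..nZ M n}. Digamma (mu P n i) - Digamma (dlt P n i + mu P n i))"

definition upd_a :: "model \<Rightarrow> nat \<Rightarrow> nat \<Rightarrow> nat \<Rightarrow> real" where
  "upd_a M n a ob = hc M n a ob + real (nZ M n)"

definition upd_b :: "model \<Rightarrow> vparams \<Rightarrow> nat \<Rightarrow> nat \<Rightarrow> nat \<Rightarrow> nat \<Rightarrow> real" where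
  "upd_b M P n a ob i = hd M n a ob -
     (\<Sum>j\<in>{1..nZ M n}. Digamma (lam P n a ob i j) - Digamma (sgm P n a ob i j + lam P n a ob i j))"

definition is_argmax :: "('b \<Rightarrow> real) \<Rightarrow> 'b set \<Rightarrow> 'b \<Rightarrow> bool" where
  "is_argmax F S x \<longleftrightarrow> x \<in> S \<and> (\<forall>y\<in>S. F y \<le> F x)"

end

(*
  With all other factors held fixed, the ELBO depends on a single variational factor only
  through a few expected sufficient statistics: E ln v and E ln (1 - v) for a Beta factor,
  E ln r and E r for a Gamma factor, and the E ln p_a for a Dirichlet factor. Collecting their
  coefficients (expected node and edge counts under the marginals of q(z), the prior
  hyperparameters, and E rho = g / h inside the stick-breaking prior) writes the part of the
  ELBO that depends on the factor as <theta - 1, E_q T> + H(q). Up to a constant this is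
  -KL(q || p_theta) for the density p_theta of the same family with parameter theta, so Gibbs'
  inequality makes p_theta the maximiser. The Digamma terms come from
  E ln (1 - v) = Digamma b - Digamma (a + b) under Beta(a, b).
*)
theory Submission
  imports Defs
begin

section \<open>Gibbs' inequality and logarithmic moments\<close>

lemma gibbs_inequality:
  fixes p q :: "'a \<Rightarrow> real"
  assumes "\<And>x. 0 \<le> p x" "\<And>x. 0 \<le> q x"
    and "integral\<^sup>L N p = 1" "integral\<^sup>L N q = 1"
    and "\<And>x. 0 < p x \<Longrightarrow> 0 < q x"
    and "integrable N (\<lambda>x. p x * ln (q x))" "integrable N (\<lambda>x. p x * ln (p x))"
  shows "(\<integral>x. p x * ln (q x) \<partial>N) \<le> (\<integral>x. p x * ln (p x) \<partial>N)"
proof -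
  have "integrable N p" "integrable N q"
    using assms(3,4) not_integrable_integral_eq by fastforce+
  have pointwise: "p x * ln (q x) - p x * ln (p x) \<le> q x - p x" for x
  proof (cases "p x > 0")
    case True
    have "p x * ln (q x) - p x * ln (p x) = p x * ln (q x / p x)"
      using True assms(5)[OF True] by (simp add: ln_div algebra_simps)
    also have "\<dots> \<le> p x * (q x / p x - 1)"
      using True assms(5)[OF True] by (intro mult_left_mono ln_le_minus_one) auto
    also have "\<dots> = q x - p x"
      using True by (simp add: field_simps)
    finally show ?thesis .
  next
    case False
    then show ?thesis using assms(1,2)[of x] by (simp add: order.antisym)
  qed
  have "(\<integral>x. p x * ln (q x) - p x * ln (p x) \<partial>N) \<le> (\<integral>x. q x - p x \<partial>N)"
    using assms \<open>integrable N p\<close> \<open>integrable N q\<close> pointwise by (intro integral_mono) auto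
  also have "\<dots> = 0"
    using assms \<open>integrable N p\<close> \<open>integrable N q\<close> by simp
  finally show ?thesis
    using assms by simp
qed

lemma
  fixes f :: "'a \<Rightarrow> real"
  assumes "f \<in> borel_measurable N" "\<And>x. 0 \<le> f x" "(\<integral>\<^sup>+x. ennreal (f x) \<partial>N) = 1"
  shows integrable_probability_density: "integrable N f"
    and integral_probability_density: "integral\<^sup>L N f = 1"
  using assms by (auto intro: integrableI_nn_integral_finite simp: integral_eq_nn_integral)

lemma abs_ln_le_powr:
  fixes r e :: real
  assumes "0 < r" "0 < e"
  shows "\<bar>ln r\<bar> \<le> (r powr e + r powr (-e)) / e"
proof -
  have "e * ln r < r powr e" "- e * ln r < r powr (-e)"
    using ln_less_self[of "r powr e"] ln_less_self[of "r powr (-e)"] assms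
    by (simp_all add: ln_powr)
  then have "\<bar>e * ln r\<bar> \<le> r powr e + r powr (-e)"
    unfolding abs_le_iff using powr_ge_zero[of r e] powr_ge_zero[of r "-e"] by linarith
  then show ?thesis
    using assms by (simp add: abs_mult field_simps)
qed

lemma integrable_mult_ln:
  fixes p g :: "'a \<Rightarrow> real"
  assumes "integrable N (\<lambda>x. p x * g x powr e)" "integrable N (\<lambda>x. p x * g x powr (-e))"
    and "0 < e" "(\<lambda>x. p x * ln (g x)) \<in> borel_measurable N"
    and "\<And>x. 0 \<le> p x" "\<And>x. p x \<noteq> 0 \<Longrightarrow> 0 < g x"
  shows "integrable N (\<lambda>x. p x * ln (g x))"
proof (rule Bochner_Integration.integrable_bound)
  show "integrable N (\<lambda>x. (p x * g x powr e + p x * g x powr (-e)) / e)"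
    using assms(1,2) by auto
  show "AE x in N. norm (p x * ln (g x)) \<le> norm ((p x * g x powr e + p x * g x powr (-e)) / e)"
  proof (intro AE_I2)
    fix x
    show "norm (p x * ln (g x)) \<le> norm ((p x * g x powr e + p x * g x powr (-e)) / e)"
    proof (cases "p x = 0")
      case False
      have "norm (p x * ln (g x)) = p x * \<bar>ln (g x)\<bar>"
        using assms(5) by (simp add: abs_mult)
      also have "\<dots> \<le> p x * ((g x powr e + g x powr (-e)) / e)"
        using False assms by (intro mult_left_mono abs_ln_le_powr) auto
      also have "\<dots> \<le> norm ((p x * g x powr e + p x * g x powr (-e)) / e)"
        by (simp add: algebra_simps add_divide_distrib)
      finally show ?thesis .
    qed simp
  qed
qed (use assms in auto)

lemma difference_quotient_tendsto:
  assumes "(f has_real_derivative D) (at x)" "filterlim h (at 0) F"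
  shows "((\<lambda>n. (f (x + h n) - f x) / h n) \<longlongrightarrow> D) F"
  using filterlim_compose[OF assms(1)[unfolded DERIV_def] assms(2)] .

lemma abs_powr_difference_quotient_le:
  fixes c h :: real
  assumes "0 < c" "c < 1" "0 < h"
  shows "\<bar>(c powr h - 1) / h\<bar> \<le> \<bar>ln c\<bar>"
proof -
  have "1 + h * ln c \<le> c powr h" "c powr h \<le> 1" "ln c < 0"
    using exp_ge_add_one_self[of "h * ln c"] assms
    by (simp_all add: powr_def mult_nonneg_nonpos)
  then show ?thesis
    using assms by (simp add: abs_if field_simps split: if_splits)
qed

section \<open>Beta densities\<close>

lemma Beta_real_pos: "0 < a \<Longrightarrow> 0 < b \<Longrightarrow> 0 < Beta a (b::real)"
  by (simp add: Beta_def)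

lemma nn_integral_beta_kernel:
  fixes a b t :: real
  assumes a: "0 < a" and b: "0 < b" and t: "0 < t"
  shows "(\<integral>\<^sup>+y. ennreal (if 0 < y \<and> y < t then y powr (a - 1) * (t - y) powr (b - 1) else 0) \<partial>lborel)
         = ennreal (t powr (a + b - 1) * Beta a b)"
proof -
  let ?f = "\<lambda>y::real. ennreal (if 0 < y \<and> y < t then y powr (a - 1) * (t - y) powr (b - 1) else 0)"
  let ?k = "\<lambda>u::real. ennreal (u powr (a - 1) * (1 - u) powr (b - 1)) * indicator {0<..<1} u"
  have "((\<lambda>u. u powr (a - 1) * (1 - u) powr (b - 1)) has_integral Beta a b) {0<..<1}"
    using has_integral_Beta_real[OF a b] has_integral_open_interval[of _ _ 0 "1::real"] by auto
  from nn_integral_has_integral_lebesgue'[OF _ this]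
  have beta: "(\<integral>\<^sup>+u. ?k u \<partial>lborel) = ennreal (Beta a b)"
    by simp
  have scale: "?f (0 + t * u) = ennreal (t powr (a + b - 2)) * ?k u" for u
  proof (cases "0 < u \<and> u < 1")
    case True
    have "(t * u) powr (a - 1) * (t * (1 - u)) powr (b - 1)
        = (t powr (a - 1) * t powr (b - 1)) * (u powr (a - 1) * (1 - u) powr (b - 1))"
      using True t by (simp add: powr_mult)
    then have "(t * u) powr (a - 1) * (t - t * u) powr (b - 1)
        = (t powr (a - 1) * t powr (b - 1)) * (u powr (a - 1) * (1 - u) powr (b - 1))"
      by (simp add: right_diff_distrib)
    also have "t powr (a - 1) * t powr (b - 1) = t powr (a + b - 2)"
      by (simp add: powr_add[symmetric])
    finally show ?thesis
      using True t by (simp add: ennreal_mult'[symmetric])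
  next
    case False
    then have "\<not> (0 < t * u \<and> t * u < t)"
      using t by (auto simp: zero_less_mult_iff)
    then show ?thesis using False by (auto simp: indicator_def)
  qed
  have "(\<integral>\<^sup>+y. ?f y \<partial>lborel) = ennreal t * (\<integral>\<^sup>+u. ?f (0 + t * u) \<partial>lborel)"
    using nn_integral_real_affine[of ?f t 0] t by simp
  also have "\<dots> = ennreal t * (ennreal (t powr (a + b - 2)) * ennreal (Beta a b))"
    unfolding scale by (subst nn_integral_cmult) (auto simp: beta)
  also have "\<dots> = ennreal (t powr (a + b - 1) * Beta a b)"
    using t by (simp add: ennreal_mult'[symmetric] powr_add[symmetric] mult.assoc[symmetric] powr_mult_base)
  finally show ?thesis .
qed

lemma beta_pdf_measurable [measurable]: "beta_pdf a b \<in> borel_measurable borel"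
  unfolding beta_pdf_def by measurable

lemma beta_pdf_nonneg: "0 < a \<Longrightarrow> 0 < b \<Longrightarrow> 0 \<le> beta_pdf a b x"
  by (simp add: beta_pdf_def Beta_real_pos less_imp_le)

lemma beta_pdf_pos: "0 < a \<Longrightarrow> 0 < b \<Longrightarrow> 0 < x \<Longrightarrow> x < 1 \<Longrightarrow> 0 < beta_pdf a b x"
  by (simp add: beta_pdf_def Beta_real_pos)

lemma beta_pdf_eq_0: "\<not> (0 < x \<and> x < 1) \<Longrightarrow> beta_pdf a b x = 0"
  by (auto simp: beta_pdf_def)

lemma nn_integral_beta_pdf:
  assumes "0 < a" "0 < b"
  shows "(\<integral>\<^sup>+x. ennreal (beta_pdf a b x) \<partial>lborel) = 1"
proof -
  have "(\<lambda>x. ennreal (beta_pdf a b x)) = (\<lambda>x. ennreal (if 0 < x \<and> x < 1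
      then x powr (a - 1) * (1 - x) powr (b - 1) else 0) * ennreal (1 / Beta a b))"
    using assms by (auto simp: beta_pdf_def ennreal_mult'[symmetric] Beta_real_pos)
  then have "(\<integral>\<^sup>+x. ennreal (beta_pdf a b x) \<partial>lborel) = ennreal (Beta a b) * ennreal (1 / Beta a b)"
    using nn_integral_beta_kernel[OF assms, of 1] by (simp add: nn_integral_multc)
  then show ?thesis
    using Beta_real_pos[OF assms] by (simp add: ennreal_mult'[symmetric])
qed

lemma
  assumes "0 < a" "0 < b"
  shows integrable_beta_pdf: "integrable lborel (beta_pdf a b)"
    and integral_beta_pdf: "integral\<^sup>L lborel (beta_pdf a b) = 1"
  using assms nn_integral_beta_pdf beta_pdf_nonneg
  by (auto intro: integrable_probability_density integral_probability_density)

lemma beta_pdf_mult_powr: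
  assumes "0 < a" "0 < b" "0 < a + e"
  shows "beta_pdf a b v * v powr e = Beta (a + e) b / Beta a b * beta_pdf (a + e) b v"
  using assms Beta_real_pos[of a b] Beta_real_pos[of "a + e" b]
  by (auto simp: beta_pdf_def powr_add[symmetric] field_simps)

lemma beta_pdf_mult_powr_one_minus:
  assumes "0 < a" "0 < b" "0 < b + e"
  shows "beta_pdf a b v * (1 - v) powr e = Beta a (b + e) / Beta a b * beta_pdf a (b + e) v"
  using assms Beta_real_pos[of a b] Beta_real_pos[of a "b + e"]
  by (auto simp: beta_pdf_def powr_add[symmetric] field_simps)

lemma integrable_beta_pdf_ln:
  assumes a: "0 < a" and b: "0 < b"
  shows "integrable lborel (\<lambda>v. beta_pdf a b v * ln v)"
proof (rule integrable_mult_ln[where e = "a / 2"])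
  have "integrable lborel (\<lambda>v. beta_pdf a b v * v powr e)" if "0 < a + e" for e
    unfolding beta_pdf_mult_powr[OF a b that] using integrable_beta_pdf[OF that b] by simp
  then show "integrable lborel (\<lambda>v. beta_pdf a b v * v powr (a / 2))"
    "integrable lborel (\<lambda>v. beta_pdf a b v * v powr (- (a / 2)))"
    using a by simp_all
qed (use a b beta_pdf_nonneg beta_pdf_eq_0 in \<open>auto intro: ccontr\<close>)

lemma integrable_beta_pdf_ln_one_minus:
  assumes a: "0 < a" and b: "0 < b"
  shows "integrable lborel (\<lambda>v. beta_pdf a b v * ln (1 - v))"
proof (rule integrable_mult_ln[where e = "b / 2"])
  have "integrable lborel (\<lambda>v. beta_pdf a b v * (1 - v) powr e)" if "0 < b + e" for e
    unfolding beta_pdf_mult_powr_one_minus[OF a b that] using integrable_beta_pdf[OF a that] by simp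
  then show "integrable lborel (\<lambda>v. beta_pdf a b v * (1 - v) powr (b / 2))"
    "integrable lborel (\<lambda>v. beta_pdf a b v * (1 - v) powr (- (b / 2)))"
    using b by simp_all
qed (use a b beta_pdf_nonneg beta_pdf_eq_0 in \<open>auto intro: ccontr\<close>)

lemma integral_beta_pdf_mult_powr_one_minus:
  assumes "0 < a" "0 < b" "0 < b + e"
  shows "(\<integral>v. beta_pdf a b v * (1 - v) powr e \<partial>lborel) = Beta a (b + e) / Beta a b"
  unfolding beta_pdf_mult_powr_one_minus[OF assms] using integral_beta_pdf[of a "b + e"] assms by simp

lemma tendsto_integral_beta_pdf_powr_quotient:
  assumes a: "0 < a" and b: "0 < b" and h_pos: "\<And>n. 0 < h n" and h_at_0: "filterlim h (at 0) sequentially"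
  shows "(\<lambda>n. \<integral>v. beta_pdf a b v * (((1 - v) powr h n - 1) / h n) \<partial>lborel)
    \<longlonglongrightarrow> (\<integral>v. beta_pdf a b v * ln (1 - v) \<partial>lborel)"
proof -
  define s where "s n v = beta_pdf a b v * (((1 - v) powr h n - 1) / h n)" for n v
  have "(\<lambda>n. integral\<^sup>L lborel (s n)) \<longlonglongrightarrow> (\<integral>v. beta_pdf a b v * ln (1 - v) \<partial>lborel)"
  proof (rule integral_dominated_convergence[where w = "\<lambda>v. \<bar>beta_pdf a b v * ln (1 - v)\<bar>"])
    show "AE v in lborel. (\<lambda>n. s n v) \<longlonglongrightarrow> beta_pdf a b v * ln (1 - v)"
    proof (intro AE_I2)
      fix v :: real
      show "(\<lambda>n. s n v) \<longlonglongrightarrow> beta_pdf a b v * ln (1 - v)"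
      proof (cases "0 < v \<and> v < 1")
        case True
        then have "((\<lambda>x. (1 - v) powr x) has_real_derivative (1 - v) powr 0 * ln (1 - v)) (at 0)"
          by (auto intro!: derivative_eq_intros)
        from difference_quotient_tendsto[OF this h_at_0]
        have "(\<lambda>n. ((1 - v) powr h n - 1) / h n) \<longlonglongrightarrow> ln (1 - v)"
          using True by simp
        then show ?thesis
          unfolding s_def by (rule tendsto_mult_left)
      qed (simp add: s_def beta_pdf_eq_0)
    qed
    show "AE v in lborel. norm (s n v) \<le> \<bar>beta_pdf a b v * ln (1 - v)\<bar>" for n
    proof (intro AE_I2)
      fix v :: real
      show "norm (s n v) \<le> \<bar>beta_pdf a b v * ln (1 - v)\<bar>"
      proof (cases "0 < v \<and> v < 1")
        case True
        have "norm (s n v) = beta_pdf a b v * \<bar>((1 - v) powr h n - 1) / h n\<bar>"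
          by (simp add: s_def abs_mult beta_pdf_nonneg a b)
        also have "\<dots> \<le> beta_pdf a b v * \<bar>ln (1 - v)\<bar>"
          using True h_pos by (intro mult_left_mono abs_powr_difference_quotient_le beta_pdf_nonneg a b) auto
        finally show ?thesis
          by (simp add: abs_mult beta_pdf_nonneg a b)
      qed (simp add: s_def beta_pdf_eq_0)
    qed
  qed (use integrable_beta_pdf_ln_one_minus[OF a b] in \<open>auto simp: s_def[abs_def]\<close>)
  then show ?thesis
    unfolding s_def .
qed

text \<open>Differentiate \<open>h \<mapsto> E[(1 - v) powr h] = Beta a (b + h) / Beta a b\<close> at \<open>h = 0\<close>
  under the integral sign.\<close>
lemma E_beta_ln_one_minus:
  assumes a: "0 < a" and b: "0 < b"
  shows "E_beta a b (\<lambda>v. ln (1 - v)) = Digamma b - Digamma (a + b)"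
proof -
  define h where "h n = inverse (real (Suc n))" for n
  have h_pos: "0 < h n" for n
    by (simp add: h_def)
  have h_at_0: "filterlim h (at 0) sequentially"
    unfolding h_def using LIMSEQ_inverse_real_of_nat by (auto simp: filterlim_at)
  have "(\<integral>v. beta_pdf a b v * (((1 - v) powr h n - 1) / h n) \<partial>lborel)
      = (Beta a (b + h n) - Beta a b) / h n / Beta a b" for n
  proof -
    have "(\<integral>v. beta_pdf a b v * (((1 - v) powr h n - 1) / h n) \<partial>lborel)
        = ((\<integral>v. beta_pdf a b v * (1 - v) powr h n \<partial>lborel) - integral\<^sup>L lborel (beta_pdf a b)) / h n"
      using integrable_beta_pdf[OF a b] h_pos[of n] a b
        beta_pdf_mult_powr_one_minus[OF a b, of "h n"] integrable_beta_pdf[OF a, of "b + h n"]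
      by (simp add: diff_divide_distrib right_diff_distrib)
    then show ?thesis
      using Beta_real_pos[OF a b] h_pos[of n] a b
      by (simp add: integral_beta_pdf_mult_powr_one_minus integral_beta_pdf field_simps)
  qed
  moreover have "(\<lambda>n. (Beta a (b + h n) - Beta a b) / h n / Beta a b) \<longlonglongrightarrow> Digamma b - Digamma (a + b)"
  proof -
    have "((\<lambda>y. Beta a y) has_real_derivative Beta a b * (Digamma b - Digamma (a + b))) (at b)"
      using a b by (intro has_field_derivative_Beta2) (auto dest: nonpos_Ints_nonpos)
    from tendsto_divide[OF difference_quotient_tendsto[OF this h_at_0] tendsto_const, of "Beta a b"]
    show ?thesis
      using Beta_real_pos[OF a b] by simp
  qed
  ultimately show ?thesis
    unfolding E_beta_def
    using tendsto_integral_beta_pdf_powr_quotient[OF a b h_pos h_at_0] LIMSEQ_unique by auto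
qed

lemma E_beta_ln_one_minus_nonpos:
  "0 < a \<Longrightarrow> 0 < b \<Longrightarrow> E_beta a b (\<lambda>v. ln (1 - v)) \<le> 0"
  using Digamma_real_mono[of b "a + b"] by (simp add: E_beta_ln_one_minus)

lemma ln_beta_pdf:
  assumes "0 < A" "0 < B" "0 < v" "v < 1"
  shows "ln (beta_pdf A B v) = (A - 1) * ln v + (B - 1) * ln (1 - v) - ln (Beta A B)"
  using assms Beta_real_pos[of A B] by (simp add: beta_pdf_def ln_div ln_mult)

lemma
  assumes a: "0 < a" and b: "0 < b" and A: "0 < A" and B: "0 < B"
  shows integrable_beta_pdf_ln_beta_pdf: "integrable lborel (\<lambda>v. beta_pdf a b v * ln (beta_pdf A B v))"
    and E_beta_ln_beta_pdf: "E_beta a b (\<lambda>v. ln (beta_pdf A B v))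
      = (A - 1) * E_beta a b ln + (B - 1) * E_beta a b (\<lambda>v. ln (1 - v)) - ln (Beta A B)"
proof -
  have "beta_pdf a b v * ln (beta_pdf A B v) = (A - 1) * (beta_pdf a b v * ln v)
      + (B - 1) * (beta_pdf a b v * ln (1 - v)) - ln (Beta A B) * beta_pdf a b v" for v
    by (cases "0 < v \<and> v < 1") (simp_all add: ln_beta_pdf A B algebra_simps beta_pdf_eq_0)
  then show "integrable lborel (\<lambda>v. beta_pdf a b v * ln (beta_pdf A B v))"
    "E_beta a b (\<lambda>v. ln (beta_pdf A B v))
      = (A - 1) * E_beta a b ln + (B - 1) * E_beta a b (\<lambda>v. ln (1 - v)) - ln (Beta A B)"
    using integrable_beta_pdf_ln[OF a b] integrable_beta_pdf_ln_one_minus[OF a b]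
      integrable_beta_pdf[OF a b] integral_beta_pdf[OF a b]
    by (simp_all add: E_beta_def)
qed

lemma beta_variational_optimum:
  assumes A: "0 < A" and B: "0 < B" and x: "0 < x" and y: "0 < y"
  shows "(A - 1) * E_beta x y ln + (B - 1) * E_beta x y (\<lambda>v. ln (1 - v)) - E_beta x y (\<lambda>v. ln (beta_pdf x y v))
      \<le> (A - 1) * E_beta A B ln + (B - 1) * E_beta A B (\<lambda>v. ln (1 - v)) - E_beta A B (\<lambda>v. ln (beta_pdf A B v))"
proof -
  have "E_beta x y (\<lambda>v. ln (beta_pdf A B v)) \<le> E_beta x y (\<lambda>v. ln (beta_pdf x y v))"
    unfolding E_beta_def
  proof (rule gibbs_inequality)
    show "0 < beta_pdf A B v" if "0 < beta_pdf x y v" for v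
      using that A B beta_pdf_eq_0[of v] by (cases "0 < v \<and> v < 1") (auto intro: beta_pdf_pos)
  qed (use A B x y in \<open>auto intro: beta_pdf_nonneg integral_beta_pdf integrable_beta_pdf_ln_beta_pdf\<close>)
  then show ?thesis
    using E_beta_ln_beta_pdf[OF x y A B] E_beta_ln_beta_pdf[OF A B A B] by simp
qed

section \<open>Gamma densities\<close>

lemma Gamma_real_nonzero: "0 < x \<Longrightarrow> Gamma x \<noteq> (0::real)"
  using Gamma_real_pos[of x] by linarith

lemma gamma_pdf_measurable [measurable]: "gamma_pdf a b \<in> borel_measurable borel"
  unfolding gamma_pdf_def by measurable

lemma gamma_pdf_nonneg: "0 < a \<Longrightarrow> 0 < b \<Longrightarrow> 0 \<le> gamma_pdf a b x"
  by (simp add: gamma_pdf_def)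

lemma gamma_pdf_pos: "0 < a \<Longrightarrow> 0 < b \<Longrightarrow> 0 < x \<Longrightarrow> 0 < gamma_pdf a b x"
  by (simp add: gamma_pdf_def)

lemma gamma_pdf_eq_0: "x \<le> 0 \<Longrightarrow> gamma_pdf a b x = 0"
  by (simp add: gamma_pdf_def)

lemma nn_integral_gamma_kernel:
  assumes a: "0 < a" and b: "0 < b"
  shows "(\<integral>\<^sup>+r. ennreal (if 0 < r then r powr (a - 1) * exp (- b * r) else 0) \<partial>lborel)
    = ennreal (Gamma a / b powr a)"
proof -
  let ?k = "\<lambda>r::real. ennreal (if 0 < r then r powr (a - 1) * exp (- b * r) else 0)"
  let ?f = "\<lambda>t::real. ennreal (t powr (a - 1) / exp t) * indicator {0..} t"
  have gamma: "(\<integral>\<^sup>+t. ?f t \<partial>lborel) = ennreal (Gamma a)"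
    by (rule nn_integral_has_integral_lebesgue'[OF _ Gamma_integral_real[OF a]]) auto
  have scale: "?f (0 + b * r) = ennreal (b powr (a - 1)) * ?k r" for r
  proof (cases "0 < r")
    case True
    then have "(b * r) powr (a - 1) / exp (b * r) = b powr (a - 1) * (r powr (a - 1) * exp (- b * r))"
      using b by (simp add: powr_mult exp_minus field_simps)
    then show ?thesis
      using True b by (simp add: ennreal_mult'[symmetric])
  next
    case False
    then show ?thesis
      using b by (auto simp: indicator_def zero_le_mult_iff)
  qed
  have "ennreal (Gamma a) = ennreal b * (\<integral>\<^sup>+r. ?f (0 + b * r) \<partial>lborel)"
    using gamma nn_integral_real_affine[of ?f b 0] b by simp
  also have "\<dots> = ennreal (b powr a) * (\<integral>\<^sup>+r. ?k r \<partial>lborel)"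
    unfolding scale using b
    by (subst nn_integral_cmult) (auto simp: ennreal_mult'[symmetric] powr_mult_base mult.assoc[symmetric])
  finally have "ennreal (1 / b powr a) * ennreal (Gamma a) = (\<integral>\<^sup>+r. ?k r \<partial>lborel)"
    using b by (simp add: mult.assoc[symmetric] ennreal_mult'[symmetric])
  then show ?thesis
    using a b by (simp add: ennreal_mult'[symmetric])
qed

lemma nn_integral_gamma_pdf:
  assumes "0 < a" "0 < b"
  shows "(\<integral>\<^sup>+x. ennreal (gamma_pdf a b x) \<partial>lborel) = 1"
proof -
  have "(\<lambda>x. ennreal (gamma_pdf a b x)) = (\<lambda>x. ennreal (if 0 < x then x powr (a - 1) * exp (- b * x) else 0)
      * ennreal (b powr a / Gamma a))"
    using assms by (auto simp: gamma_pdf_def ennreal_mult'[symmetric])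
  then have "(\<integral>\<^sup>+x. ennreal (gamma_pdf a b x) \<partial>lborel) = ennreal (Gamma a / b powr a) * ennreal (b powr a / Gamma a)"
    using nn_integral_gamma_kernel[OF assms] by (simp add: nn_integral_multc)
  then show ?thesis
    using assms Gamma_real_nonzero[of a] by (simp add: ennreal_mult'[symmetric])
qed

lemma
  assumes "0 < a" "0 < b"
  shows integrable_gamma_pdf: "integrable lborel (gamma_pdf a b)"
    and integral_gamma_pdf: "integral\<^sup>L lborel (gamma_pdf a b) = 1"
  using assms nn_integral_gamma_pdf gamma_pdf_nonneg
  by (auto intro: integrable_probability_density integral_probability_density)

lemma gamma_pdf_mult_powr:
  assumes a: "0 < a" and b: "0 < b" and e: "0 < a + e"
  shows "gamma_pdf a b r * r powr e = Gamma (a + e) / (Gamma a * b powr e) * gamma_pdf (a + e) b r"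
proof (cases "0 < r")
  case True
  have "b powr (a + e) = b powr a * b powr e" "r powr (a + e - 1) = r powr e * r powr (a - 1)"
    using powr_add[of b a e] powr_add[of r e "a - 1"] by (simp_all add: algebra_simps)
  then show ?thesis
    using True a b e Gamma_real_nonzero[of a] Gamma_real_nonzero[of "a + e"]
    by (simp add: gamma_pdf_def field_simps)
qed (simp add: gamma_pdf_eq_0)

lemma
  assumes "0 < a" "0 < b" "0 < a + e"
  shows integrable_gamma_pdf_mult_powr: "integrable lborel (\<lambda>r. gamma_pdf a b r * r powr e)"
    and integral_gamma_pdf_mult_powr:
      "(\<integral>r. gamma_pdf a b r * r powr e \<partial>lborel) = Gamma (a + e) / (Gamma a * b powr e)"
  unfolding gamma_pdf_mult_powr[OF assms]
  using assms integrable_gamma_pdf[of "a + e" b] integral_gamma_pdf[of "a + e" b] by simp_all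

lemma
  assumes a: "0 < a" and b: "0 < b"
  shows integrable_gamma_pdf_mult_id: "integrable lborel (\<lambda>r. gamma_pdf a b r * r)"
    and E_gamma_id: "E_gamma a b (\<lambda>r. r) = a / b"
proof -
  have eq: "gamma_pdf a b r * r = gamma_pdf a b r * r powr 1" for r
    by (cases "0 < r") (simp_all add: gamma_pdf_eq_0)
  show "integrable lborel (\<lambda>r. gamma_pdf a b r * r)"
    unfolding eq using integrable_gamma_pdf_mult_powr[OF a b, of 1] a by simp
  show "E_gamma a b (\<lambda>r. r) = a / b"
  proof -
    have "Gamma (a + 1) = a * Gamma a"
      using a by (intro Gamma_plus1) (auto dest: nonpos_Ints_nonpos)
    then show ?thesis
      unfolding E_gamma_def eq using integral_gamma_pdf_mult_powr[OF a b, of 1] a b Gamma_real_nonzero[of a]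
      by simp
  qed
qed

lemma integrable_gamma_pdf_ln:
  assumes a: "0 < a" and b: "0 < b"
  shows "integrable lborel (\<lambda>r. gamma_pdf a b r * ln r)"
proof (rule integrable_mult_ln[where e = "a / 2"])
  show "integrable lborel (\<lambda>r. gamma_pdf a b r * r powr (a / 2))"
    "integrable lborel (\<lambda>r. gamma_pdf a b r * r powr (- (a / 2)))"
    using a b by (simp_all add: integrable_gamma_pdf_mult_powr)
qed (use a b gamma_pdf_nonneg gamma_pdf_eq_0 in \<open>auto intro: ccontr\<close>)

lemma ln_gamma_pdf:
  assumes "0 < A" "0 < B" "0 < r"
  shows "ln (gamma_pdf A B r) = A * ln B - ln (Gamma A) + (A - 1) * ln r - B * r"
  using assms Gamma_real_pos[of A] Gamma_real_nonzero[of A] by (simp add: gamma_pdf_def ln_div ln_mult)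

lemma
  assumes a: "0 < a" and b: "0 < b" and A: "0 < A" and B: "0 < B"
  shows integrable_gamma_pdf_ln_gamma_pdf: "integrable lborel (\<lambda>r. gamma_pdf a b r * ln (gamma_pdf A B r))"
    and E_gamma_ln_gamma_pdf: "E_gamma a b (\<lambda>r. ln (gamma_pdf A B r))
      = A * ln B - ln (Gamma A) + (A - 1) * E_gamma a b ln - B * E_gamma a b (\<lambda>r. r)"
proof -
  have "gamma_pdf a b r * ln (gamma_pdf A B r) = (A * ln B - ln (Gamma A)) * gamma_pdf a b r
      + (A - 1) * (gamma_pdf a b r * ln r) - B * (gamma_pdf a b r * r)" for r
    by (cases "0 < r") (simp_all add: ln_gamma_pdf A B algebra_simps gamma_pdf_eq_0)
  then show "integrable lborel (\<lambda>r. gamma_pdf a b r * ln (gamma_pdf A B r))"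
    "E_gamma a b (\<lambda>r. ln (gamma_pdf A B r))
      = A * ln B - ln (Gamma A) + (A - 1) * E_gamma a b ln - B * E_gamma a b (\<lambda>r. r)"
    using integrable_gamma_pdf_ln[OF a b] integrable_gamma_pdf_mult_id[OF a b]
      integrable_gamma_pdf[OF a b] integral_gamma_pdf[OF a b]
    by (simp_all add: E_gamma_def)
qed

lemma gamma_variational_optimum:
  assumes A: "0 < A" and B: "0 < B" and x: "0 < x" and y: "0 < y"
  shows "(A - 1) * E_gamma x y ln - B * E_gamma x y (\<lambda>r. r) - E_gamma x y (\<lambda>r. ln (gamma_pdf x y r))
      \<le> (A - 1) * E_gamma A B ln - B * E_gamma A B (\<lambda>r. r) - E_gamma A B (\<lambda>r. ln (gamma_pdf A B r))"
proof -
  have "E_gamma x y (\<lambda>r. ln (gamma_pdf A B r)) \<le> E_gamma x y (\<lambda>r. ln (gamma_pdf x y r))"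
    unfolding E_gamma_def
  proof (rule gibbs_inequality)
    show "0 < gamma_pdf A B r" if "0 < gamma_pdf x y r" for r
      using that A B gamma_pdf_eq_0[of r] by (cases "0 < r") (auto intro: gamma_pdf_pos)
  qed (use A B x y in \<open>auto intro: gamma_pdf_nonneg integral_gamma_pdf integrable_gamma_pdf_ln_gamma_pdf\<close>)
  then show ?thesis
    using E_gamma_ln_gamma_pdf[OF x y A B] E_gamma_ln_gamma_pdf[OF A B A B] by simp
qed

section \<open>Dirichlet densities\<close>

abbreviation lborel_coords :: "nat \<Rightarrow> (nat \<Rightarrow> real) measure" where
  "lborel_coords m \<equiv> PiM {..<m} (\<lambda>_. lborel)"

interpretation lborel_product: product_sigma_finite "\<lambda>_::nat. lborel :: real measure"
  by standard

text \<open>Unnormalised Dirichlet density in the free coordinates x_0, ..., x_(m-1) of the scaled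
  simplex of total mass s; be is the exponent of the implicit last coordinate.\<close>
definition simplex_kernel :: "nat \<Rightarrow> (nat \<Rightarrow> real) \<Rightarrow> real \<Rightarrow> real \<Rightarrow> (nat \<Rightarrow> real) \<Rightarrow> real" where
  "simplex_kernel m al be s x = (if (\<forall>a<m. 0 < x a) \<and> 0 < s - (\<Sum>a<m. x a)
     then (\<Prod>a<m. x a powr (al a - 1)) * (s - (\<Sum>a<m. x a)) powr (be - 1) else 0)"

lemma simplex_kernel_measurable [measurable]:
  "simplex_kernel m al be s \<in> borel_measurable (lborel_coords m)"
  unfolding simplex_kernel_def by measurable

lemma simplex_kernel_nonneg: "0 \<le> simplex_kernel m al be s x"
  by (auto simp: simplex_kernel_def intro!: mult_nonneg_nonneg prod_nonneg)

lemma simplex_kernel_Suc_upd: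
  fixes x :: "nat \<Rightarrow> real"
  shows "simplex_kernel (Suc m) al be s (x(m := y)) =
    (if \<forall>a<m. 0 < x a then \<Prod>a<m. x a powr (al a - 1) else 0) *
    (if 0 < y \<and> y < s - (\<Sum>a<m. x a)
     then y powr (al m - 1) * ((s - (\<Sum>a<m. x a)) - y) powr (be - 1) else 0)"
proof -
  have "(\<Sum>a<m. (x(m := y)) a) = (\<Sum>a<m. x a)" "(\<Prod>a<m. (x(m := y)) a powr (al a - 1)) = (\<Prod>a<m. x a powr (al a - 1))"
    by (auto intro!: sum.cong prod.cong)
  moreover have "(\<forall>a<Suc m. 0 < (x(m := y)) a) \<longleftrightarrow> (\<forall>a<m. 0 < x a) \<and> 0 < y"
    by (auto simp: less_Suc_eq)
  ultimately show ?thesis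
    unfolding simplex_kernel_def by (auto simp: algebra_simps)
qed

lemma nn_integral_simplex_kernel_last:
  assumes "0 < al m" "0 < be"
  shows "(\<integral>\<^sup>+y. ennreal (simplex_kernel (Suc m) al be s (x(m := y))) \<partial>lborel) =
    ennreal (simplex_kernel m al (al m + be) s x) * ennreal (Beta (al m) be)"
proof -
  define t where "t = s - (\<Sum>a<m. x a)"
  define C where "C = (if \<forall>a<m. 0 < x a then \<Prod>a<m. x a powr (al a - 1) else 0)"
  let ?k = "\<lambda>y. ennreal (if 0 < y \<and> y < t then y powr (al m - 1) * (t - y) powr (be - 1) else 0)"
  have "C \<ge> 0"
    by (auto simp: C_def intro!: prod_nonneg)
  then have "(\<integral>\<^sup>+y. ennreal (simplex_kernel (Suc m) al be s (x(m := y))) \<partial>lborel)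
      = ennreal C * (\<integral>\<^sup>+y. ?k y \<partial>lborel)"
    unfolding simplex_kernel_Suc_upd C_def[symmetric] t_def[symmetric]
    by (subst nn_integral_cmult[symmetric]) (auto simp: ennreal_mult' intro!: nn_integral_cong)
  also have "\<dots> = ennreal (simplex_kernel m al (al m + be) s x) * ennreal (Beta (al m) be)"
  proof (cases "0 < t")
    case True
    have "C * t powr (al m + be - 1) = simplex_kernel m al (al m + be) s x"
      using True by (auto simp: C_def simplex_kernel_def t_def)
    moreover have "(\<integral>\<^sup>+y. ?k y \<partial>lborel) = ennreal (t powr (al m + be - 1)) * ennreal (Beta (al m) be)"
      using True assms Beta_real_pos[OF assms] by (simp add: nn_integral_beta_kernel ennreal_mult)
    ultimately show ?thesis
      using \<open>C \<ge> 0\<close> Beta_real_pos[OF assms]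
      by (simp add: ennreal_mult[symmetric] simplex_kernel_nonneg mult.assoc[symmetric])
  next
    case False
    then have "?k = (\<lambda>_. 0)" "simplex_kernel m al (al m + be) s x = 0"
      by (auto simp: simplex_kernel_def t_def)
    then show ?thesis by simp
  qed
  finally show ?thesis .
qed

lemma nn_integral_simplex_kernel:
  assumes "\<forall>a<m. 0 < al a" "0 < be" "0 < s"
  shows "(\<integral>\<^sup>+x. ennreal (simplex_kernel m al be s x) \<partial>lborel_coords m) =
    ennreal (s powr ((\<Sum>a<m. al a) + be - 1) * (\<Prod>a<m. Gamma (al a)) * Gamma be / Gamma ((\<Sum>a<m. al a) + be))"
  using assms
proof (induction m arbitrary: be)
  case 0
  have "(\<integral>\<^sup>+x. ennreal (simplex_kernel 0 al be s x) \<partial>lborel_coords 0) = ennreal (simplex_kernel 0 al be s (\<lambda>_. undefined))"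
    by (simp add: lborel_product.nn_integral_empty)
  then show ?case
    using 0 by (simp add: simplex_kernel_def Gamma_real_nonzero)
next
  case (Suc m)
  have al: "\<forall>a<m. 0 < al a" "0 < al m"
    using Suc.prems by auto
  have be: "0 < al m + be"
    using al Suc.prems(2) by linarith
  have sum_pos: "0 < (\<Sum>a<m. al a) + (al m + be)"
    using al by (intro add_nonneg_pos[OF sum_nonneg be]) (auto intro: less_imp_le)
  have "(\<integral>\<^sup>+x. ennreal (simplex_kernel (Suc m) al be s x) \<partial>lborel_coords (Suc m))
      = (\<integral>\<^sup>+x. (\<integral>\<^sup>+y. ennreal (simplex_kernel (Suc m) al be s (x(m := y))) \<partial>lborel) \<partial>lborel_coords m)"
    unfolding lessThan_Suc
    by (rule lborel_product.product_nn_integral_insert)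
      (use simplex_kernel_measurable[of "Suc m"] in \<open>auto simp: lessThan_Suc\<close>)
  also have "\<dots> = (\<integral>\<^sup>+x. ennreal (simplex_kernel m al (al m + be) s x) \<partial>lborel_coords m) * ennreal (Beta (al m) be)"
    by (simp add: nn_integral_simplex_kernel_last al Suc.prems nn_integral_multc)
  also have "\<dots> = ennreal (s powr ((\<Sum>a<Suc m. al a) + be - 1) * (\<Prod>a<Suc m. Gamma (al a)) * Gamma be
      / Gamma ((\<Sum>a<Suc m. al a) + be))"
    using Suc.IH[OF al(1) be Suc.prems(3)] sum_pos al be Suc.prems Beta_real_pos[OF al(2) Suc.prems(2)]
      Gamma_real_nonzero[OF be]
    by (simp add: ennreal_mult'[symmetric] Beta_def algebra_simps prod_nonneg less_imp_le)
  finally show ?case .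
qed

definition dirichlet_const :: "(nat \<Rightarrow> real) \<Rightarrow> nat \<Rightarrow> real" where
  "dirichlet_const al M = Gamma (\<Sum>a<M. al a) / (\<Prod>a<M. Gamma (al a))"

lemma dirichlet_const_pos:
  assumes "\<forall>a<M. 0 < al a" "1 \<le> M"
  shows "0 < dirichlet_const al M"
proof -
  have "0 \<in> {..<M}"
    using assms by simp
  then have "{..<M} \<noteq> {}"
    by blast
  then have "0 < (\<Sum>a<M. al a)"
    using assms by (intro sum_pos) auto
  then show ?thesis
    unfolding dirichlet_const_def using assms by (intro divide_pos_pos Gamma_real_pos prod_pos) auto
qed

lemma dir_dens_eq:
  "\<forall>b<M. 0 < p b \<Longrightarrow> dir_dens al M p = dirichlet_const al M * (\<Prod>b<M. p b powr (al b - 1))"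
  by (simp add: dir_dens_def dirichlet_const_def)

lemma dir_dens_eq_0: "\<not> (\<forall>b<M. 0 < p b) \<Longrightarrow> dir_dens al M p = 0"
  by (auto simp: dir_dens_def)

lemma dir_dens_nonneg: "\<forall>a<M. 0 < al a \<Longrightarrow> 1 \<le> M \<Longrightarrow> 0 \<le> dir_dens al M p"
  using dirichlet_const_pos[of M al]
  by (cases "\<forall>b<M. 0 < p b") (auto simp: dir_dens_eq dir_dens_eq_0 intro!: mult_nonneg_nonneg prod_nonneg)

lemma dir_dens_pos: "\<forall>a<M. 0 < al a \<Longrightarrow> 1 \<le> M \<Longrightarrow> \<forall>b<M. 0 < p b \<Longrightarrow> 0 < dir_dens al M p"
  using dirichlet_const_pos[of M al] by (auto simp: dir_dens_eq intro!: mult_pos_pos prod_pos)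

lemma dir_dens_simplex_ext:
  "dir_dens al (Suc m) (simplex_ext (Suc m) x) = dirichlet_const al (Suc m) * simplex_kernel m al (al m) 1 x"
proof -
  have pos: "(\<forall>a<Suc m. 0 < simplex_ext (Suc m) x a) \<longleftrightarrow> (\<forall>a<m. 0 < x a) \<and> 0 < 1 - (\<Sum>a<m. x a)"
    by (auto simp: simplex_ext_def less_Suc_eq)
  have "(\<Prod>a<Suc m. simplex_ext (Suc m) x a powr (al a - 1)) =
      (\<Prod>a<m. x a powr (al a - 1)) * (1 - (\<Sum>a<m. x a)) powr (al m - 1)"
    by (simp add: simplex_ext_def)
  then show ?thesis
    using pos by (auto simp: dir_dens_eq dir_dens_eq_0 simplex_kernel_def)
qed

lemma simplex_ext_measurable [measurable]:
  "(\<lambda>x. simplex_ext M x a) \<in> borel_measurable (lborel_coords (M - 1))"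
  by (cases "a < M - 1"; cases "a = M - 1") (simp_all add: simplex_ext_def)

lemma dir_dens_simplex_ext_measurable [measurable]:
  assumes "1 \<le> M"
  shows "(\<lambda>x. dir_dens al M (simplex_ext M x)) \<in> borel_measurable (lborel_coords (M - 1))"
  using assms by (cases M) (simp_all add: dir_dens_simplex_ext)

lemma nn_integral_dir_dens:
  assumes al: "\<forall>a<M. 0 < al a" and M: "1 \<le> M"
  shows "(\<integral>\<^sup>+x. ennreal (dir_dens al M (simplex_ext M x)) \<partial>lborel_coords (M - 1)) = 1"
proof -
  obtain m where m: "M = Suc m"
    using M by (cases M) auto
  have C: "0 < dirichlet_const al (Suc m)"
    using dirichlet_const_pos[OF al M] m by simp
  have pos: "0 < (\<Prod>a<m. Gamma (al a))" "0 < Gamma (al m)" "0 < Gamma ((\<Sum>a<m. al a) + al m)"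
    using al m by (auto intro!: prod_pos Gamma_real_pos add_nonneg_pos[OF sum_nonneg] less_imp_le)
  have "(\<integral>\<^sup>+x. ennreal (dir_dens al M (simplex_ext M x)) \<partial>lborel_coords (M - 1))
      = ennreal (dirichlet_const al (Suc m)) * (\<integral>\<^sup>+x. ennreal (simplex_kernel m al (al m) 1 x) \<partial>lborel_coords m)"
    unfolding m using C
    by (subst nn_integral_cmult[symmetric])
      (auto simp: dir_dens_simplex_ext ennreal_mult simplex_kernel_nonneg)
  also have "\<dots> = ennreal (dirichlet_const al (Suc m))
      * ennreal ((\<Prod>a<m. Gamma (al a)) * Gamma (al m) / Gamma ((\<Sum>a<m. al a) + al m))"
    using al m by (simp add: nn_integral_simplex_kernel)
  also have "\<dots> = 1"
    using C pos al m Gamma_real_nonzero by (simp add: ennreal_mult'[symmetric] dirichlet_const_def)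
  finally show ?thesis .
qed

lemma
  assumes "\<forall>a<M. 0 < al a" "1 \<le> M"
  shows integrable_dir_dens: "integrable (lborel_coords (M - 1)) (\<lambda>x. dir_dens al M (simplex_ext M x))"
    and integral_dir_dens: "(\<integral>x. dir_dens al M (simplex_ext M x) \<partial>lborel_coords (M - 1)) = 1"
  using integrable_probability_density integral_probability_density
    dir_dens_simplex_ext_measurable[OF assms(2)] dir_dens_nonneg[OF assms] nn_integral_dir_dens[OF assms]
  by blast+

lemma dir_dens_mult_powr:
  assumes al: "\<forall>b<M. 0 < al b" and M: "1 \<le> M" and a: "a < M" and e: "0 < al a + e"
  defines "al' \<equiv> al(a := al a + e)"
  shows "dir_dens al M p * p a powr e = dirichlet_const al M / dirichlet_const al' M * dir_dens al' M p"
proof (cases "\<forall>b<M. 0 < p b")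
  case True
  have "0 < dirichlet_const al' M"
    using al e M by (intro dirichlet_const_pos) (auto simp: al'_def)
  moreover have "(\<Prod>b<M. p b powr (al b - 1)) * p a powr e = (\<Prod>b<M. p b powr (al' b - 1))"
  proof -
    have "(\<Prod>b<M. p b powr (al' b - 1)) = p a powr (al a - 1 + e) * (\<Prod>b\<in>{..<M}-{a}. p b powr (al b - 1))"
      using a by (subst prod.remove[of _ a]) (auto simp: al'_def algebra_simps intro!: prod.cong)
    also have "\<dots> = (\<Prod>b<M. p b powr (al b - 1)) * p a powr e"
      using a by (subst (2) prod.remove[of _ a]) (auto simp: powr_add)
    finally show ?thesis ..
  qed
  ultimately show ?thesis
    using True by (simp add: dir_dens_eq field_simps)
qed (simp add: dir_dens_eq_0)

lemma integrable_dir_dens_ln: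
  assumes al: "\<forall>b<M. 0 < al b" and M: "1 \<le> M" and a: "a < M"
  shows "integrable (lborel_coords (M - 1)) (\<lambda>x. dir_dens al M (simplex_ext M x) * ln (simplex_ext M x a))"
proof (rule integrable_mult_ln[where e = "al a / 2"])
  have "integrable (lborel_coords (M - 1)) (\<lambda>x. dir_dens al M (simplex_ext M x) * simplex_ext M x a powr e)"
    if "0 < al a + e" for e
    unfolding dir_dens_mult_powr[OF al M a that]
    using al that by (intro integrable_mult_right integrable_dir_dens M) auto
  then show "integrable (lborel_coords (M - 1)) (\<lambda>x. dir_dens al M (simplex_ext M x) * simplex_ext M x a powr (al a / 2))"
    "integrable (lborel_coords (M - 1)) (\<lambda>x. dir_dens al M (simplex_ext M x) * simplex_ext M x a powr (- (al a / 2)))"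
    using al a by simp_all
  show "(\<lambda>x. dir_dens al M (simplex_ext M x) * ln (simplex_ext M x a)) \<in> borel_measurable (lborel_coords (M - 1))"
    using dir_dens_simplex_ext_measurable[OF M] by measurable
  show "0 < simplex_ext M x a" if "dir_dens al M (simplex_ext M x) \<noteq> 0" for x
    using that a dir_dens_eq_0 by blast
qed (use al M a dir_dens_nonneg in auto)

lemma ln_dir_dens:
  assumes al: "\<forall>b<M. 0 < al b" and M: "1 \<le> M" and p: "\<forall>b<M. 0 < p b"
  shows "ln (dir_dens al M p) = ln (dirichlet_const al M) + (\<Sum>b<M. (al b - 1) * ln (p b))"
proof -
  have "0 < (\<Prod>b<M. p b powr (al b - 1))"
    using p by (intro prod_pos) auto
  then have "ln (dir_dens al M p) = ln (dirichlet_const al M) + ln (\<Prod>b<M. p b powr (al b - 1))"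
    unfolding dir_dens_eq[OF p] by (rule ln_mult_pos[OF dirichlet_const_pos[OF al M]])
  also have "ln (\<Prod>b<M. p b powr (al b - 1)) = (\<Sum>b<M. (al b - 1) * ln (p b))"
    using p by (subst ln_prod) (auto simp: ln_powr)
  finally show ?thesis .
qed

lemma
  assumes ph: "\<forall>b<M. 0 < ph b" and al: "\<forall>b<M. 0 < al b" and M: "1 \<le> M"
  shows integrable_dir_dens_ln_dir_dens:
      "integrable (lborel_coords (M - 1)) (\<lambda>x. dir_dens ph M (simplex_ext M x) * ln (dir_dens al M (simplex_ext M x)))"
    and E_dir_ln_dir_dens:
      "E_dir ph M (\<lambda>p. ln (dir_dens al M p)) = ln (dirichlet_const al M) + (\<Sum>b<M. (al b - 1) * E_dir ph M (\<lambda>p. ln (p b)))"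
proof -
  have eq: "dir_dens ph M p * ln (dir_dens al M p) =
      ln (dirichlet_const al M) * dir_dens ph M p + (\<Sum>b<M. (al b - 1) * (dir_dens ph M p * ln (p b)))" for p
    by (cases "\<forall>b<M. 0 < p b")
      (simp_all add: ln_dir_dens[OF al M] dir_dens_eq_0 algebra_simps sum_distrib_left)
  have "integrable (lborel_coords (M - 1)) (\<lambda>x. \<Sum>b<M. (al b - 1) * (dir_dens ph M (simplex_ext M x) * ln (simplex_ext M x b)))"
    using integrable_dir_dens_ln[OF ph M] by auto
  then show "integrable (lborel_coords (M - 1)) (\<lambda>x. dir_dens ph M (simplex_ext M x) * ln (dir_dens al M (simplex_ext M x)))"
    "E_dir ph M (\<lambda>p. ln (dir_dens al M p)) = ln (dirichlet_const al M) + (\<Sum>b<M. (al b - 1) * E_dir ph M (\<lambda>p. ln (p b)))"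
    unfolding eq E_dir_def using integrable_dir_dens[OF ph M] integral_dir_dens[OF ph M] integrable_dir_dens_ln[OF ph M]
    by (simp_all add: integral_sum)
qed

lemma dirichlet_variational_optimum:
  assumes al: "\<forall>b<M. 0 < al b" and ph: "\<forall>b<M. 0 < ph b" and M: "1 \<le> M"
  shows "(\<Sum>b<M. (al b - 1) * E_dir ph M (\<lambda>p. ln (p b))) - E_dir ph M (\<lambda>p. ln (dir_dens ph M p))
      \<le> (\<Sum>b<M. (al b - 1) * E_dir al M (\<lambda>p. ln (p b))) - E_dir al M (\<lambda>p. ln (dir_dens al M p))"
proof -
  have "E_dir ph M (\<lambda>p. ln (dir_dens al M p)) \<le> E_dir ph M (\<lambda>p. ln (dir_dens ph M p))"
    unfolding E_dir_def
  proof (rule gibbs_inequality)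
    show "0 < dir_dens al M (simplex_ext M x)" if "0 < dir_dens ph M (simplex_ext M x)" for x
      using that al M dir_dens_pos[of M al "simplex_ext M x"] dir_dens_eq_0[of M "simplex_ext M x" ph] by auto
  qed (use dir_dens_nonneg[OF al M] dir_dens_nonneg[OF ph M] integral_dir_dens[OF al M]
      integral_dir_dens[OF ph M] integrable_dir_dens_ln_dir_dens[OF ph al M]
      integrable_dir_dens_ln_dir_dens[OF ph ph M] in auto)
  then show ?thesis
    using E_dir_ln_dir_dens[OF ph al M] E_dir_ln_dir_dens[OF al al M] by simp
qed

section \<open>Optimal variational factors\<close>

lemma
  fixes f g :: "real \<Rightarrow> real"
  assumes f: "integrable lborel f" and g: "integrable lborel g"
  shows integrable_lborel_pair_mult: "integrable (lborel \<Otimes>\<^sub>M lborel) (\<lambda>p. f (fst p) * g (snd p))"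
    and integral_lborel_pair_mult:
      "(\<integral>p. f (fst p) * g (snd p) \<partial>(lborel \<Otimes>\<^sub>M lborel)) = integral\<^sup>L lborel f * integral\<^sup>L lborel g"
proof -
  have [measurable]: "f \<in> borel_measurable borel" "g \<in> borel_measurable borel"
    using borel_measurable_integrable[OF f] borel_measurable_integrable[OF g] by simp_all
  have "(\<integral>\<^sup>+p. ennreal (norm (f (fst p) * g (snd p))) \<partial>(lborel \<Otimes>\<^sub>M lborel))
      = (\<integral>\<^sup>+x. ennreal (norm (f x)) \<partial>lborel) * (\<integral>\<^sup>+y. ennreal (norm (g y)) \<partial>lborel)"
    by (subst lborel.nn_integral_fst[symmetric])
      (auto simp: abs_mult ennreal_mult nn_integral_cmult nn_integral_multc)
  also have "\<dots> < \<infinity>"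
    using f g by (simp add: integrable_iff_bounded ennreal_mult_less_top)
  finally show int: "integrable (lborel \<Otimes>\<^sub>M lborel) (\<lambda>p. f (fst p) * g (snd p))"
    by (simp add: integrable_iff_bounded)
  show "(\<integral>p. f (fst p) * g (snd p) \<partial>(lborel \<Otimes>\<^sub>M lborel)) = integral\<^sup>L lborel f * integral\<^sup>L lborel g"
    using lborel_pair.integral_fst'[OF int] by simp
qed

lemma Beta_one_left:
  assumes "0 < r"
  shows "Beta 1 r = 1 / (r::real)"
proof -
  have "Gamma (r + 1) = r * Gamma r"
    using assms by (intro Gamma_plus1) (auto dest: nonpos_Ints_nonpos)
  then show ?thesis
    using assms Gamma_real_nonzero[of r] by (simp add: Beta_def add.commute)
qed

text \<open>Since ln Beta(u; 1, rho) = ln rho + (rho - 1) ln (1 - u), the factors of u and rho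
  interact only through E rho * E ln (1 - u).\<close>
lemma E_stick_prior_eq:
  assumes a: "0 < a" and b: "0 < b" and g: "0 < g" and h: "0 < h"
  shows "E_stick_prior a b g h = E_gamma g h ln + (g / h - 1) * E_beta a b (\<lambda>v. ln (1 - v))"
proof -
  have "beta_pdf a b v * gamma_pdf g h r * ln (beta_pdf 1 r v) =
      beta_pdf a b v * (gamma_pdf g h r * ln r)
      + (beta_pdf a b v * ln (1 - v)) * (gamma_pdf g h r * r - gamma_pdf g h r)" for v r
  proof (cases "0 < v \<and> v < 1 \<and> 0 < r")
    case True
    then have "ln (beta_pdf 1 r v) = (r - 1) * ln (1 - v) + ln r"
      by (simp add: ln_beta_pdf Beta_one_left ln_div)
    then show ?thesis
      by (simp only:) (simp add: algebra_simps)
  qed (auto simp: beta_pdf_eq_0 gamma_pdf_eq_0)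
  moreover have "integrable lborel (\<lambda>r. gamma_pdf g h r * r - gamma_pdf g h r)"
    "(\<integral>r. gamma_pdf g h r * r - gamma_pdf g h r \<partial>lborel) = g / h - 1"
    using integrable_gamma_pdf_mult_id[OF g h] E_gamma_id[OF g h] integrable_gamma_pdf[OF g h]
      integral_gamma_pdf[OF g h] by (simp_all add: E_gamma_def)
  ultimately show ?thesis
    unfolding E_stick_prior_def E_gamma_def E_beta_def
    using integrable_beta_pdf[OF a b] integral_beta_pdf[OF a b] integrable_gamma_pdf_ln[OF g h]
      integrable_beta_pdf_ln_one_minus[OF a b]
      integrable_lborel_pair_mult[of "beta_pdf a b" "\<lambda>r. gamma_pdf g h r * ln r"]
      integral_lborel_pair_mult[of "beta_pdf a b" "\<lambda>r. gamma_pdf g h r * ln r"]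
      integrable_lborel_pair_mult[of "\<lambda>v. beta_pdf a b v * ln (1 - v)" "\<lambda>r. gamma_pdf g h r * r - gamma_pdf g h r"]
      integral_lborel_pair_mult[of "\<lambda>v. beta_pdf a b v * ln (1 - v)" "\<lambda>r. gamma_pdf g h r * r - gamma_pdf g h r"]
    by simp
qed

lemma is_argmax_add_const:
  assumes "\<And>p. p \<in> S \<Longrightarrow> L p = C + F p" "is_argmax F S x"
  shows "is_argmax L S x"
  using assms by (simp add: is_argmax_def)

text \<open>The part of the ELBO that depends on one stick-breaking factor Beta(x, y); the data term
  contributes the coefficients A - 1 and B - g / h, and g / h = E rho enters through the prior.\<close>
definition stick_factor_elbo :: "real \<Rightarrow> real \<Rightarrow> real \<Rightarrow> real \<Rightarrow> real \<Rightarrow> real \<Rightarrow> real" where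
  "stick_factor_elbo A B g h x y = (A - 1) * E_beta x y ln + (B - g / h) * E_beta x y (\<lambda>v. ln (1 - v))
     + E_stick_prior x y g h - E_beta x y (\<lambda>v. ln (beta_pdf x y v))"

lemma is_argmax_stick_factor_elbo:
  assumes g: "0 < g" and h: "0 < h" and A: "1 \<le> A" and B: "g / h \<le> B"
  shows "is_argmax (\<lambda>(x, y). stick_factor_elbo A B g h x y) {(x, y). 0 < x \<and> 0 < y} (A, B)"
proof -
  have A0: "0 < A" and B0: "0 < B"
    using A B divide_pos_pos[OF g h] by linarith+
  have "stick_factor_elbo A B g h x y = (A - 1) * E_beta x y ln + (B - 1) * E_beta x y (\<lambda>v. ln (1 - v))
      - E_beta x y (\<lambda>v. ln (beta_pdf x y v)) + E_gamma g h ln" if "0 < x" "0 < y" for x y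
    unfolding stick_factor_elbo_def E_stick_prior_eq[OF that g h] by (simp add: algebra_simps)
  then show ?thesis
    using beta_variational_optimum[OF A0 B0] A0 B0 by (auto simp: is_argmax_def)
qed

definition gamma_factor_elbo :: "real \<Rightarrow> real \<Rightarrow> 'j set \<Rightarrow> ('j \<Rightarrow> real) \<Rightarrow> ('j \<Rightarrow> real) \<Rightarrow> real \<Rightarrow> real \<Rightarrow> real" where
  "gamma_factor_elbo c d J s l x y = (\<Sum>j\<in>J. E_stick_prior (s j) (l j) x y)
     + E_gamma x y (\<lambda>r. ln (gamma_pdf c d r)) - E_gamma x y (\<lambda>r. ln (gamma_pdf x y r))"

lemma is_argmax_gamma_factor_elbo:
  assumes c: "0 < c" and d: "0 < d" and J: "finite J" and sl: "\<forall>j\<in>J. 0 < s j \<and> 0 < l j"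
  shows "is_argmax (\<lambda>(x, y). gamma_factor_elbo c d J s l x y) {(x, y). 0 < x \<and> 0 < y}
    (c + real (card J), d - (\<Sum>j\<in>J. Digamma (l j) - Digamma (s j + l j)))"
proof -
  define S where "S = (\<Sum>j\<in>J. E_beta (s j) (l j) (\<lambda>v. ln (1 - v)))"
  define A where "A = c + real (card J)"
  define B where "B = d - S"
  have "S \<le> 0"
    unfolding S_def using sl by (intro sum_nonpos E_beta_ln_one_minus_nonpos) auto
  then have A0: "0 < A" and B0: "0 < B"
    using c d by (simp_all add: A_def B_def add_pos_nonneg)
  have "gamma_factor_elbo c d J s l x y = (A - 1) * E_gamma x y ln - B * E_gamma x y (\<lambda>r. r)
      - E_gamma x y (\<lambda>r. ln (gamma_pdf x y r)) + (c * ln d - ln (Gamma c) - S)" if "0 < x" "0 < y" for x y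
  proof -
    have sticks: "(\<Sum>j\<in>J. E_stick_prior (s j) (l j) x y) = real (card J) * E_gamma x y ln + (x / y - 1) * S"
      unfolding S_def using sl that
      by (simp add: E_stick_prior_eq sum.distrib sum_distrib_left cong: sum.cong)
    show ?thesis
      unfolding gamma_factor_elbo_def sticks E_gamma_ln_gamma_pdf[OF that c d] E_gamma_id[OF that] A_def B_def
      by (simp add: algebra_simps diff_divide_distrib)
  qed
  moreover have "B = d - (\<Sum>j\<in>J. Digamma (l j) - Digamma (s j + l j))"
    unfolding B_def S_def using sl by (simp add: E_beta_ln_one_minus cong: sum.cong)
  ultimately show ?thesis
    using gamma_variational_optimum[OF A0 B0] A0 B0 by (auto simp: is_argmax_def A_def)
qed

definition dirichlet_factor_elbo :: "(nat \<Rightarrow> real) \<Rightarrow> (nat \<Rightarrow> real) \<Rightarrow> nat \<Rightarrow> (nat \<Rightarrow> real) \<Rightarrow> real" where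
  "dirichlet_factor_elbo th W M x = (\<Sum>b<M. W b * E_dir x M (\<lambda>p. ln (p b)))
     + E_dir x M (\<lambda>p. ln (dir_dens th M p)) - E_dir x M (\<lambda>p. ln (dir_dens x M p))"

lemma is_argmax_dirichlet_factor_elbo:
  assumes M: "1 \<le> M" and th: "\<forall>b<M. 0 < th b" and W: "\<forall>b<M. 0 \<le> W b"
  shows "is_argmax (dirichlet_factor_elbo th W M) (PiE {..<M} (\<lambda>_. {0<..})) (\<lambda>b\<in>{..<M}. th b + W b)"
proof -
  define U where "U = (\<lambda>b\<in>{..<M}. th b + W b)"
  have U: "\<forall>b<M. 0 < U b"
    using th W by (simp add: U_def add_pos_nonneg)
  have eq: "dirichlet_factor_elbo th W M x = (\<Sum>b<M. (U b - 1) * E_dir x M (\<lambda>p. ln (p b)))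
      - E_dir x M (\<lambda>p. ln (dir_dens x M p)) + ln (dirichlet_const th M)" if "\<forall>b<M. 0 < x b" for x
  proof -
    have "(\<Sum>b<M. (U b - 1) * E_dir x M (\<lambda>p. ln (p b)))
        = (\<Sum>b<M. W b * E_dir x M (\<lambda>p. ln (p b))) + (\<Sum>b<M. (th b - 1) * E_dir x M (\<lambda>p. ln (p b)))"
      unfolding sum.distrib[symmetric] by (rule sum.cong) (auto simp: U_def algebra_simps)
    then show ?thesis
      unfolding dirichlet_factor_elbo_def E_dir_ln_dir_dens[OF that th M] by linarith
  qed
  show ?thesis
    unfolding is_argmax_def U_def[symmetric]
  proof (intro conjI ballI)
    show "U \<in> PiE {..<M} (\<lambda>_. {0<..})"
      using U by (auto simp: U_def)
    fix x :: "nat \<Rightarrow> real"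
    assume "x \<in> PiE {..<M} (\<lambda>_. {0<..})"
    then have x: "\<forall>b<M. 0 < x b"
      by auto
    show "dirichlet_factor_elbo th W M x \<le> dirichlet_factor_elbo th W M U"
      unfolding eq[OF x] eq[OF U] using dirichlet_variational_optimum[OF U x M] by simp
  qed
qed

section \<open>Node histories and the factor q(z)\<close>

lemma finite_hists: "finite (hists Z t)"
proof -
  have "hists Z t = {zs. set zs \<subseteq> {1..Z} \<and> length zs = Suc t}"
    by (auto simp: hists_def)
  then show ?thesis
    using finite_lists_length_eq[of "{1..Z}" "Suc t"] by simp
qed

lemma replicate_in_hists: "1 \<le> Z \<Longrightarrow> replicate (Suc t) 1 \<in> hists Z t"
  by (auto simp: hists_def)

lemma hists_nth:
  assumes "zs \<in> hists Z t" "\<tau> \<le> t"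
  shows "zs ! \<tau> \<in> {1..Z}"
proof -
  have "zs ! \<tau> \<in> set zs" "set zs \<subseteq> {1..Z}"
    using assms by (auto simp: hists_def intro!: nth_mem)
  then show ?thesis by blast
qed

lemma fsc_joint_tilde_pos: "0 < fsc_joint (eta_t P n) (om_t P n) (pi_t M P n) acts obsv zs t"
  unfolding fsc_joint_def eta_t_def om_t_def pi_t_def by (intro mult_pos_pos prod_pos) auto

lemma marg_t_pos: "1 \<le> nZ M n \<Longrightarrow> 0 < marg_t M P n k t"
  unfolding marg_t_def fsc_marg_def
  by (rule sum_pos2[OF finite_hists replicate_in_hists]) (auto intro: less_imp_le fsc_joint_tilde_pos)

lemma marg_t_nonneg: "0 \<le> marg_t M P n k t"
  unfolding marg_t_def fsc_marg_def by (intro sum_nonneg less_imp_le fsc_joint_tilde_pos)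

lemma cond_t_nonneg: "0 \<le> cond_t M P n k t zs"
  unfolding cond_t_def fsc_cond_def fsc_marg_def
  by (intro divide_nonneg_nonneg sum_nonneg less_imp_le fsc_joint_tilde_pos)

lemma sum_cond_t: "1 \<le> nZ M n \<Longrightarrow> (\<Sum>zs\<in>hists (nZ M n) t. cond_t M P n k t zs) = 1"
  using marg_t_pos[of M n P k t]
  unfolding cond_t_def fsc_cond_def marg_t_def fsc_marg_def by (simp add: sum_divide_distrib[symmetric])

lemma nu_t_nonneg:
  assumes wf: "wf_model M" and k: "k \<in> {1..nK M}" and t: "t \<le> T M k"
  shows "0 \<le> nu_t M P k t"
proof -
  have "0 \<le> rtil M k' t'" if "k' \<in> {1..nK M}" "t' \<le> T M k'" for k' t'
    using wf that unfolding rtil_def wf_model_def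
    by (intro divide_nonneg_nonneg mult_nonneg_nonneg prod_nonneg) (auto intro: less_imp_le)
  then have "0 \<le> Vhat_t M P"
    unfolding Vhat_t_def by (intro mult_nonneg_nonneg sum_nonneg prod_nonneg marg_t_nonneg) auto
  then show ?thesis
    using wf k t unfolding nu_t_def wf_model_def
    by (intro divide_nonneg_nonneg mult_nonneg_nonneg prod_nonneg marg_t_nonneg) (auto intro: less_imp_le)
qed

lemma sum_PiE_prod_marginal:
  fixes c :: "'i \<Rightarrow> 'z \<Rightarrow> real"
  assumes I: "finite I" "n \<in> I" and H: "\<And>m. m \<in> I \<Longrightarrow> finite (H m)"
    and one: "\<And>m. m \<in> I \<Longrightarrow> (\<Sum>z\<in>H m. c m z) = 1"
  shows "(\<Sum>zv\<in>PiE I H. (\<Prod>m\<in>I. c m (zv m)) * \<phi> (zv n)) = (\<Sum>z\<in>H n. c n z * \<phi> z)"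
proof -
  define c' where "c' m z = (if m = n then c m z * \<phi> z else c m z)" for m z
  have "(\<Prod>m\<in>I. c m (zv m)) * \<phi> (zv n) = (\<Prod>m\<in>I. c' m (zv m))" for zv
  proof -
    have "(\<Prod>m\<in>I - {n}. c' m (zv m)) = (\<Prod>m\<in>I - {n}. c m (zv m))"
      by (rule prod.cong) (auto simp: c'_def)
    then show ?thesis
      using I by (simp add: prod.remove c'_def)
  qed
  then have "(\<Sum>zv\<in>PiE I H. (\<Prod>m\<in>I. c m (zv m)) * \<phi> (zv n)) = (\<Prod>m\<in>I. \<Sum>z\<in>H m. c' m z)"
    using I H by (simp add: prod_sum_PiE)
  also have "\<dots> = (\<Sum>z\<in>H n. c' n z) * (\<Prod>m\<in>I - {n}. \<Sum>z\<in>H m. c' m z)"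
    using I by (simp add: prod.remove)
  also have "(\<Prod>m\<in>I - {n}. \<Sum>z\<in>H m. c' m z) = 1"
    by (rule prod.neutral) (auto simp: c'_def one)
  finally show ?thesis
    by (simp add: c'_def)
qed

text \<open>Expectation of a function of agent n's node history under the factor q_(n,t)^k of the
  paper; the weight nu_t is included, so indicators give the marginals qm1 and qm2.\<close>
definition q_expect :: "model \<Rightarrow> vparams \<Rightarrow> nat \<Rightarrow> nat \<Rightarrow> nat \<Rightarrow> (nat list \<Rightarrow> real) \<Rightarrow> real" where
  "q_expect M P n k t \<phi> = nu_t M P k t * (\<Sum>zs\<in>hists (nZ M n) t. cond_t M P n k t zs * \<phi> zs)"

lemma qz_marginal:
  assumes "wf_model M" "n \<in> {1..nAg M}"
  shows "(\<Sum>zv\<in>vhists M t. qz M P k t zv * \<phi> (zv n)) = q_expect M P n k t \<phi>"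
proof -
  have "(\<Sum>zv\<in>vhists M t. (\<Prod>m\<in>{1..nAg M}. cond_t M P m k t (zv m)) * \<phi> (zv n))
      = (\<Sum>zs\<in>hists (nZ M n) t. cond_t M P n k t zs * \<phi> zs)"
    unfolding vhists_def using assms
    by (intro sum_PiE_prod_marginal) (auto simp: finite_hists wf_model_def intro!: sum_cond_t)
  moreover have "(\<Sum>zv\<in>vhists M t. qz M P k t zv * \<phi> (zv n))
      = nu_t M P k t * (\<Sum>zv\<in>vhists M t. (\<Prod>m\<in>{1..nAg M}. cond_t M P m k t (zv m)) * \<phi> (zv n))"
    unfolding qz_def by (simp add: sum_distrib_left mult.assoc)
  ultimately show ?thesis
    unfolding q_expect_def by simp
qed

lemma q_expect_add: "q_expect M P n k t (\<lambda>zs. f zs + g zs) = q_expect M P n k t f + q_expect M P n k t g"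
  by (simp add: q_expect_def sum.distrib distrib_left)

lemma q_expect_cmult: "q_expect M P n k t (\<lambda>zs. c * f zs) = c * q_expect M P n k t f"
  by (simp add: q_expect_def sum_distrib_left mult_ac)

lemma q_expect_sum:
  "q_expect M P n k t (\<lambda>zs. \<Sum>\<tau>\<in>S. f \<tau> zs) = (\<Sum>\<tau>\<in>S. q_expect M P n k t (f \<tau>))"
proof -
  have "(\<Sum>zs\<in>hists (nZ M n) t. cond_t M P n k t zs * (\<Sum>\<tau>\<in>S. f \<tau> zs))
      = (\<Sum>\<tau>\<in>S. \<Sum>zs\<in>hists (nZ M n) t. cond_t M P n k t zs * f \<tau> zs)"
    unfolding sum_distrib_left by (rule sum.swap)
  then show ?thesis
    unfolding q_expect_def by (simp add: sum_distrib_left)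
qed

lemma q_expect_indicator:
  "q_expect M P n k t (\<lambda>zs. of_bool (Q zs)) = nu_t M P k t * (\<Sum>zs\<in>{zs\<in>hists (nZ M n) t. Q zs}. cond_t M P n k t zs)"
  by (simp add: q_expect_def sum.inter_filter[OF finite_hists] of_bool_def if_distrib cong: if_cong)

lemma q_expect_node_eq: "q_expect M P n k t (\<lambda>zs. of_bool (zs ! \<tau> = i)) = qm1 M P n k t \<tau> i"
  by (simp add: q_expect_indicator qm1_def)

lemma q_expect_edge_eq:
  "q_expect M P n k t (\<lambda>zs. of_bool (zs ! (\<tau> - 1) = i \<and> zs ! \<tau> = j)) = qm2 M P n k t \<tau> i j"
  by (simp add: q_expect_indicator qm2_def)

lemma sum_node_above:
  assumes "H \<subseteq> hists Z t" "\<tau> \<le> t"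
  shows "(\<Sum>zs\<in>{zs\<in>H. i < zs ! \<tau>}. f zs) = (\<Sum>m\<in>{i+1..Z}. \<Sum>zs\<in>{zs\<in>H. zs ! \<tau> = m}. f zs)"
proof -
  have "finite H"
    using assms(1) finite_hists finite_subset by blast
  moreover have "zs ! \<tau> \<in> {1..Z}" if "zs \<in> H" for zs
    using that assms hists_nth by blast
  ultimately show ?thesis
    by (subst sum.group[symmetric, of "{zs\<in>H. i < zs ! \<tau>}" "{i+1..Z}" "\<lambda>zs. zs ! \<tau>"])
      (auto intro!: sum.cong)
qed

lemma q_expect_node_above:
  assumes "\<tau> \<le> t"
  shows "q_expect M P n k t (\<lambda>zs. of_bool (i < zs ! \<tau>)) = (\<Sum>m\<in>{i+1..nZ M n}. qm1 M P n k t \<tau> m)"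
  unfolding q_expect_indicator qm1_def sum_node_above[OF subset_refl assms] sum_distrib_left ..

lemma q_expect_edge_above:
  assumes "\<tau> \<le> t"
  shows "q_expect M P n k t (\<lambda>zs. of_bool (zs ! (\<tau> - 1) = i \<and> j < zs ! \<tau>))
    = (\<Sum>m\<in>{j+1..nZ M n}. qm2 M P n k t \<tau> i m)"
proof -
  define H where "H = {zs\<in>hists (nZ M n) t. zs ! (\<tau> - 1) = i}"
  have "{zs\<in>hists (nZ M n) t. zs ! (\<tau> - 1) = i \<and> j < zs ! \<tau>} = {zs\<in>H. j < zs ! \<tau>}"
    "{zs\<in>hists (nZ M n) t. zs ! (\<tau> - 1) = i \<and> zs ! \<tau> = m} = {zs\<in>H. zs ! \<tau> = m}" for m
    by (auto simp: H_def)
  moreover have "H \<subseteq> hists (nZ M n) t"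
    by (auto simp: H_def)
  ultimately show ?thesis
    unfolding q_expect_indicator qm2_def
    by (simp only: sum_node_above[OF _ assms] sum_distrib_left)
qed

lemma
  assumes "wf_model M" "k \<in> {1..nK M}" "t \<le> T M k"
  shows qm1_nonneg: "0 \<le> qm1 M P n k t \<tau> i"
    and qm2_nonneg: "0 \<le> qm2 M P n k t \<tau> i j"
  unfolding qm1_def qm2_def using assms
  by (auto intro!: mult_nonneg_nonneg nu_t_nonneg sum_nonneg cond_t_nonneg)

section \<open>Coordinate updates of the ELBO\<close>

lemma sum_diff_single:
  fixes f g :: "'a \<Rightarrow> 'b::ab_group_add"
  assumes "finite S" "i \<in> S" "\<And>j. j \<in> S \<Longrightarrow> j \<noteq> i \<Longrightarrow> g j = f j"
  shows "sum g S - sum f S = g i - f i"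
proof -
  have "sum g (S - {i}) = sum f (S - {i})"
    using assms by (intro sum.cong) auto
  then show ?thesis
    using assms by (simp add: sum.remove)
qed

lemma sum2_diff_single:
  fixes f g :: "'a \<Rightarrow> 'b \<Rightarrow> 'c::ab_group_add"
  assumes "finite N" "\<And>n. finite (I n)" "n' \<in> N" "i' \<in> I n'"
    and "\<And>n i. n \<in> N \<Longrightarrow> i \<in> I n \<Longrightarrow> (n, i) \<noteq> (n', i') \<Longrightarrow> g n i = f n i"
  shows "(\<Sum>n\<in>N. \<Sum>i\<in>I n. g n i) - (\<Sum>n\<in>N. \<Sum>i\<in>I n. f n i) = g n' i' - f n' i'"
  using assms by (simp add: sum_diff_single[where i = n'] sum_diff_single[where i = i'] cong: sum.cong)

lemma sum4_diff_single:
  fixes f g :: "'a \<Rightarrow> 'b \<Rightarrow> 'c \<Rightarrow> 'd \<Rightarrow> 'e::ab_group_add"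
  assumes "finite N" "\<And>n. finite (A n)" "\<And>n. finite (B n)" "\<And>n. finite (C n)"
    and "n' \<in> N" "a' \<in> A n'" "b' \<in> B n'" "c' \<in> C n'"
    and "\<And>n a b c. n \<in> N \<Longrightarrow> a \<in> A n \<Longrightarrow> b \<in> B n \<Longrightarrow> c \<in> C n \<Longrightarrow>
      (n, a, b, c) \<noteq> (n', a', b', c') \<Longrightarrow> g n a b c = f n a b c"
  shows "(\<Sum>n\<in>N. \<Sum>a\<in>A n. \<Sum>b\<in>B n. \<Sum>c\<in>C n. g n a b c)
    - (\<Sum>n\<in>N. \<Sum>a\<in>A n. \<Sum>b\<in>B n. \<Sum>c\<in>C n. f n a b c) = g n' a' b' c' - f n' a' b' c'"
  using assms
  by (simp add: sum_diff_single[where i = n'] sum_diff_single[where i = a'] sum_diff_single[where i = b']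
      sum_diff_single[where i = c'] cong: sum.cong)

lemma sum5_diff_single:
  fixes f g :: "'a \<Rightarrow> 'b \<Rightarrow> 'c \<Rightarrow> 'd \<Rightarrow> 'd \<Rightarrow> 'e::ab_group_add"
  assumes "finite N" "\<And>n. finite (A n)" "\<And>n. finite (B n)" "\<And>n. finite (C n)"
    and "n' \<in> N" "a' \<in> A n'" "b' \<in> B n'" "c' \<in> C n'" "d' \<in> C n'"
    and "\<And>n a b c d. n \<in> N \<Longrightarrow> a \<in> A n \<Longrightarrow> b \<in> B n \<Longrightarrow> c \<in> C n \<Longrightarrow> d \<in> C n \<Longrightarrow>
      (n, a, b, c, d) \<noteq> (n', a', b', c', d') \<Longrightarrow> g n a b c d = f n a b c d"
  shows "(\<Sum>n\<in>N. \<Sum>a\<in>A n. \<Sum>b\<in>B n. \<Sum>c\<in>C n. \<Sum>d\<in>C n. g n a b c d)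
    - (\<Sum>n\<in>N. \<Sum>a\<in>A n. \<Sum>b\<in>B n. \<Sum>c\<in>C n. \<Sum>d\<in>C n. f n a b c d)
    = g n' a' b' c' d' - f n' a' b' c' d'"
  using assms
  by (simp add: sum_diff_single[where i = n'] sum_diff_single[where i = a'] sum_diff_single[where i = b']
      sum_diff_single[where i = c'] sum_diff_single[where i = d'] cong: sum.cong)

definition Elog_p_data :: "model \<Rightarrow> vparams \<Rightarrow> vparams \<Rightarrow> real" where
  "Elog_p_data M P0 P = (1 / real (nK M)) * (\<Sum>k\<in>{1..nK M}. \<Sum>t\<le>T M k. \<Sum>zv\<in>vhists M t.
     qz M P0 k t zv * (ln (rtil M k t) + (\<Sum>n\<in>{1..nAg M}. Ejoint M P n k t (zv n))))"

definition Elog_p_u :: "model \<Rightarrow> vparams \<Rightarrow> real" where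
  "Elog_p_u M P = (\<Sum>n\<in>{1..nAg M}. \<Sum>i\<in>{1..nZ M n}. E_stick_prior (dlt P n i) (mu P n i) (gg P n) (hh P n))"

definition Elog_p_V :: "model \<Rightarrow> vparams \<Rightarrow> real" where
  "Elog_p_V M P = (\<Sum>n\<in>{1..nAg M}. \<Sum>a<nA M n. \<Sum>ob<nO M n. \<Sum>i\<in>{1..nZ M n}. \<Sum>j\<in>{1..nZ M n}.
     E_stick_prior (sgm P n a ob i j) (lam P n a ob i j) (aa P n a ob i) (bb P n a ob i))"

definition Elog_p_pi :: "model \<Rightarrow> vparams \<Rightarrow> real" where
  "Elog_p_pi M P = (\<Sum>n\<in>{1..nAg M}. \<Sum>i\<in>{1..nZ M n}.
     E_dir (phi P n i) (nA M n) (\<lambda>p. ln (dir_dens (theta M n i) (nA M n) p)))"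

definition Elog_p_rho :: "model \<Rightarrow> vparams \<Rightarrow> real" where
  "Elog_p_rho M P = (\<Sum>n\<in>{1..nAg M}. E_gamma (gg P n) (hh P n) (\<lambda>r. ln (gamma_pdf (he M) (hf M) r)))"

definition Elog_p_alpha :: "model \<Rightarrow> vparams \<Rightarrow> real" where
  "Elog_p_alpha M P = (\<Sum>n\<in>{1..nAg M}. \<Sum>a<nA M n. \<Sum>ob<nO M n. \<Sum>i\<in>{1..nZ M n}.
     E_gamma (aa P n a ob i) (bb P n a ob i) (\<lambda>r. ln (gamma_pdf (hc M n a ob) (hd M n a ob) r)))"

definition Elog_q_u :: "model \<Rightarrow> vparams \<Rightarrow> real" where
  "Elog_q_u M P = (\<Sum>n\<in>{1..nAg M}. \<Sum>i\<in>{1..nZ M n}.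
     E_beta (dlt P n i) (mu P n i) (\<lambda>v. ln (beta_pdf (dlt P n i) (mu P n i) v)))"

definition Elog_q_V :: "model \<Rightarrow> vparams \<Rightarrow> real" where
  "Elog_q_V M P = (\<Sum>n\<in>{1..nAg M}. \<Sum>a<nA M n. \<Sum>ob<nO M n. \<Sum>i\<in>{1..nZ M n}. \<Sum>j\<in>{1..nZ M n}.
     E_beta (sgm P n a ob i j) (lam P n a ob i j) (\<lambda>v. ln (beta_pdf (sgm P n a ob i j) (lam P n a ob i j) v)))"

definition Elog_q_rho :: "model \<Rightarrow> vparams \<Rightarrow> real" where
  "Elog_q_rho M P = (\<Sum>n\<in>{1..nAg M}. E_gamma (gg P n) (hh P n) (\<lambda>r. ln (gamma_pdf (gg P n) (hh P n) r)))"

definition Elog_q_alpha :: "model \<Rightarrow> vparams \<Rightarrow> real" where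
  "Elog_q_alpha M P = (\<Sum>n\<in>{1..nAg M}. \<Sum>a<nA M n. \<Sum>ob<nO M n. \<Sum>i\<in>{1..nZ M n}.
     E_gamma (aa P n a ob i) (bb P n a ob i) (\<lambda>r. ln (gamma_pdf (aa P n a ob i) (bb P n a ob i) r)))"

definition Elog_q_pi :: "model \<Rightarrow> vparams \<Rightarrow> real" where
  "Elog_q_pi M P = (\<Sum>n\<in>{1..nAg M}. \<Sum>i\<in>{1..nZ M n}.
     E_dir (phi P n i) (nA M n) (\<lambda>p. ln (dir_dens (phi P n i) (nA M n) p)))"

definition Elog_q_z :: "model \<Rightarrow> vparams \<Rightarrow> real" where
  "Elog_q_z M P0 = (1 / real (nK M)) * (\<Sum>k\<in>{1..nK M}. \<Sum>t\<le>T M k. \<Sum>zv\<in>vhists M t.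
     qz M P0 k t zv * ln (qz M P0 k t zv))"

lemma ELBO_decompose:
  "ELBO M P0 P = Elog_p_data M P0 P + Elog_p_u M P + Elog_p_V M P + Elog_p_pi M P
     + Elog_p_rho M P + Elog_p_alpha M P
     - (Elog_q_u M P + Elog_q_V M P + Elog_q_rho M P + Elog_q_alpha M P + Elog_q_pi M P + Elog_q_z M P0)"
  unfolding ELBO_def Elog_p_data_def Elog_p_u_def Elog_p_V_def Elog_p_pi_def Elog_p_rho_def
    Elog_p_alpha_def Elog_q_u_def Elog_q_V_def Elog_q_rho_def Elog_q_alpha_def Elog_q_pi_def Elog_q_z_def
  by simp

lemma Elog_p_data_change:
  assumes wf: "wf_model M" and n: "n \<in> {1..nAg M}"
    and other: "\<And>n' k t zs. n' \<in> {1..nAg M} \<Longrightarrow> n' \<noteq> n \<Longrightarrow> Ejoint M P' n' k t zs = Ejoint M P n' k t zs"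
    and this_agent: "\<And>k t zs. Ejoint M P' n k t zs = Ejoint M P n k t zs + \<delta> k t zs"
  shows "Elog_p_data M P0 P' = Elog_p_data M P0 P
    + (1 / real (nK M)) * (\<Sum>k\<in>{1..nK M}. \<Sum>t\<le>T M k. q_expect M P0 n k t (\<delta> k t))"
proof -
  have "(\<Sum>n'\<in>{1..nAg M}. Ejoint M P' n' k t (zv n'))
      = (\<Sum>n'\<in>{1..nAg M}. Ejoint M P n' k t (zv n')) + \<delta> k t (zv n)" for k t zv
    using sum_diff_single[of "{1..nAg M}" n "\<lambda>n'. Ejoint M P n' k t (zv n')" "\<lambda>n'. Ejoint M P' n' k t (zv n')"]
      n other this_agent by simp
  then have "(\<Sum>zv\<in>vhists M t. qz M P0 k t zv * (ln (rtil M k t) + (\<Sum>n'\<in>{1..nAg M}. Ejoint M P' n' k t (zv n'))))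
      = (\<Sum>zv\<in>vhists M t. qz M P0 k t zv * (ln (rtil M k t) + (\<Sum>n'\<in>{1..nAg M}. Ejoint M P n' k t (zv n'))))
        + q_expect M P0 n k t (\<delta> k t)" for k t
    by (simp add: distrib_left sum.distrib qz_marginal[OF wf n, symmetric] add_ac)
  then show ?thesis
    unfolding Elog_p_data_def by (simp add: sum.distrib distrib_left)
qed

lemma stick_log_weight_change:
  fixes f f' g g' :: "nat \<Rightarrow> real"
  assumes "1 \<le> i" "\<And>m. m \<noteq> i \<Longrightarrow> f' m = f m" "\<And>m. m \<noteq> i \<Longrightarrow> g' m = g m"
  shows "f' j + (\<Sum>m\<in>{1..<j}. g' m)
    = f j + (\<Sum>m\<in>{1..<j}. g m) + of_bool (j = i) * (f' i - f i) + of_bool (i < j) * (g' i - g i)"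
proof -
  have "(\<Sum>m\<in>{1..<j}. g' m) - (\<Sum>m\<in>{1..<j}. g m) = of_bool (i < j) * (g' i - g i)"
  proof (cases "i < j")
    case False
    then have "sum g' {1..<j} = sum g {1..<j}"
      using assms by (intro sum.cong) auto
    then show ?thesis
      using False by simp
  qed (use assms in \<open>simp add: sum_diff_single\<close>)
  moreover have "f' j - f j = of_bool (j = i) * (f' i - f i)"
    using assms by (cases "j = i") simp_all
  ultimately show ?thesis
    by linarith
qed

lemma Elog_eta_update:
  fixes P :: vparams and n i :: nat and x y :: real
  assumes "1 \<le> i"
  defines "P' \<equiv> P\<lparr>dlt := (dlt P)(n := (dlt P n)(i := x)), mu := (mu P)(n := (mu P n)(i := y))\<rparr>"
  shows "Elog_eta P' n j = Elog_eta P n j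
    + of_bool (j = i) * (E_beta x y ln - E_beta (dlt P n i) (mu P n i) ln)
    + of_bool (i < j) * (E_beta x y (\<lambda>v. ln (1 - v)) - E_beta (dlt P n i) (mu P n i) (\<lambda>v. ln (1 - v)))"
  using stick_log_weight_change[OF assms(1),
      of "\<lambda>m. E_beta (dlt P' n m) (mu P' n m) ln" "\<lambda>m. E_beta (dlt P n m) (mu P n m) ln"
        "\<lambda>m. E_beta (dlt P' n m) (mu P' n m) (\<lambda>v. ln (1 - v))" "\<lambda>m. E_beta (dlt P n m) (mu P n m) (\<lambda>v. ln (1 - v))"]
  by (simp add: Elog_eta_def P'_def)

lemma Elog_p_data_update_u:
  fixes P :: vparams and n i :: nat and x y :: real
  assumes wf: "wf_model M" and n: "n \<in> {1..nAg M}" and i: "i \<in> {1..nZ M n}"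
  defines "P' \<equiv> P\<lparr>dlt := (dlt P)(n := (dlt P n)(i := x)), mu := (mu P)(n := (mu P n)(i := y))\<rparr>"
  shows "Elog_p_data M P0 P' = Elog_p_data M P0 P
    + (upd_dlt M P0 n i - 1) * (E_beta x y ln - E_beta (dlt P n i) (mu P n i) ln)
    + (upd_mu M P0 P n i - gg P n / hh P n)
      * (E_beta x y (\<lambda>v. ln (1 - v)) - E_beta (dlt P n i) (mu P n i) (\<lambda>v. ln (1 - v)))"
proof -
  define Lb where "Lb = E_beta x y ln - E_beta (dlt P n i) (mu P n i) ln"
  define Lm where "Lm = E_beta x y (\<lambda>v. ln (1 - v)) - E_beta (dlt P n i) (mu P n i) (\<lambda>v. ln (1 - v))"
  have "Elog_pi M P' = Elog_pi M P" "Elog_omega P' = Elog_omega P"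
    by (simp_all add: fun_eq_iff Elog_pi_def Elog_omega_def P'_def)
  moreover have "Elog_eta P' n' = Elog_eta P n'" if "n' \<noteq> n" for n'
    using that by (simp add: fun_eq_iff Elog_eta_def P'_def)
  moreover have "Elog_eta P' n j = Elog_eta P n j + of_bool (j = i) * Lb + of_bool (i < j) * Lm" for j
    unfolding P'_def Lb_def Lm_def using i by (intro Elog_eta_update) simp
  ultimately have "Elog_p_data M P0 P' = Elog_p_data M P0 P + (1 / real (nK M)) * (\<Sum>k\<in>{1..nK M}. \<Sum>t\<le>T M k.
      q_expect M P0 n k t (\<lambda>zs. Lb * of_bool (zs ! 0 = i) + Lm * of_bool (i < zs ! 0)))"
    using i by (intro Elog_p_data_change[OF wf n]) (auto simp: Ejoint_def algebra_simps)
  also have "\<dots> = Elog_p_data M P0 P + (1 / real (nK M)) * (\<Sum>k\<in>{1..nK M}. \<Sum>t\<le>T M k.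
      Lb * qm1 M P0 n k t 0 i + Lm * (\<Sum>m\<in>{i+1..nZ M n}. qm1 M P0 n k t 0 m))"
    by (simp add: q_expect_add q_expect_cmult q_expect_node_eq q_expect_node_above)
  also have "\<dots> = Elog_p_data M P0 P + (upd_dlt M P0 n i - 1) * Lb + (upd_mu M P0 P n i - gg P n / hh P n) * Lm"
    by (simp add: upd_dlt_def upd_mu_def sum.distrib sum_distrib_left algebra_simps)
  finally show ?thesis
    unfolding Lb_def Lm_def .
qed

lemma ELBO_update_u:
  fixes P :: vparams and n i :: nat and x y :: real
  assumes wf: "wf_model M" and n: "n \<in> {1..nAg M}" and i: "i \<in> {1..nZ M n}"
  defines "P' \<equiv> P\<lparr>dlt := (dlt P)(n := (dlt P n)(i := x)), mu := (mu P)(n := (mu P n)(i := y))\<rparr>"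
  shows "ELBO M P0 P' = ELBO M P0 P
    - stick_factor_elbo (upd_dlt M P0 n i) (upd_mu M P0 P n i) (gg P n) (hh P n) (dlt P n i) (mu P n i)
    + stick_factor_elbo (upd_dlt M P0 n i) (upd_mu M P0 P n i) (gg P n) (hh P n) x y"
proof -
  have "Elog_p_u M P' - Elog_p_u M P
      = E_stick_prior x y (gg P n) (hh P n) - E_stick_prior (dlt P n i) (mu P n i) (gg P n) (hh P n)"
    "Elog_q_u M P' - Elog_q_u M P = E_beta x y (\<lambda>v. ln (beta_pdf x y v))
      - E_beta (dlt P n i) (mu P n i) (\<lambda>v. ln (beta_pdf (dlt P n i) (mu P n i) v))"
    unfolding Elog_p_u_def Elog_q_u_def using n i
    by (subst sum2_diff_single[where n' = n and i' = i]; auto simp: P'_def)+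
  moreover have "Elog_p_V M P' = Elog_p_V M P" "Elog_p_pi M P' = Elog_p_pi M P"
    "Elog_p_rho M P' = Elog_p_rho M P" "Elog_p_alpha M P' = Elog_p_alpha M P"
    "Elog_q_V M P' = Elog_q_V M P" "Elog_q_rho M P' = Elog_q_rho M P"
    "Elog_q_alpha M P' = Elog_q_alpha M P" "Elog_q_pi M P' = Elog_q_pi M P"
    by (simp_all add: P'_def Elog_p_V_def Elog_p_pi_def Elog_p_rho_def Elog_p_alpha_def
        Elog_q_V_def Elog_q_rho_def Elog_q_alpha_def Elog_q_pi_def)
  ultimately show ?thesis
    unfolding ELBO_decompose Elog_p_data_update_u[OF wf n i, where P = P and x = x and y = y and P0 = P0, folded P'_def] stick_factor_elbo_def
    by (simp add: algebra_simps)
qed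

lemma ELBO_update_rho:
  fixes P :: vparams and n :: nat and x y :: real
  assumes n: "n \<in> {1..nAg M}"
  defines "P' \<equiv> P\<lparr>gg := (gg P)(n := x), hh := (hh P)(n := y)\<rparr>"
  shows "ELBO M P0 P' = ELBO M P0 P
    - gamma_factor_elbo (he M) (hf M) {1..nZ M n} (dlt P n) (mu P n) (gg P n) (hh P n)
    + gamma_factor_elbo (he M) (hf M) {1..nZ M n} (dlt P n) (mu P n) x y"
proof -
  have "Elog_p_u M P' - Elog_p_u M P = (\<Sum>i\<in>{1..nZ M n}. E_stick_prior (dlt P n i) (mu P n i) x y)
      - (\<Sum>i\<in>{1..nZ M n}. E_stick_prior (dlt P n i) (mu P n i) (gg P n) (hh P n))"
    "Elog_p_rho M P' - Elog_p_rho M P = E_gamma x y (\<lambda>r. ln (gamma_pdf (he M) (hf M) r))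
      - E_gamma (gg P n) (hh P n) (\<lambda>r. ln (gamma_pdf (he M) (hf M) r))"
    "Elog_q_rho M P' - Elog_q_rho M P = E_gamma x y (\<lambda>r. ln (gamma_pdf x y r))
      - E_gamma (gg P n) (hh P n) (\<lambda>r. ln (gamma_pdf (gg P n) (hh P n) r))"
    unfolding Elog_p_u_def Elog_p_rho_def Elog_q_rho_def using n
    by (subst sum_diff_single[where i = n]; auto simp: P'_def)+
  moreover have "Elog_p_data M P0 P' = Elog_p_data M P0 P" "Elog_p_V M P' = Elog_p_V M P"
    "Elog_p_pi M P' = Elog_p_pi M P" "Elog_p_alpha M P' = Elog_p_alpha M P"
    "Elog_q_u M P' = Elog_q_u M P" "Elog_q_V M P' = Elog_q_V M P"
    "Elog_q_alpha M P' = Elog_q_alpha M P" "Elog_q_pi M P' = Elog_q_pi M P"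
    by (simp_all add: P'_def Elog_p_data_def Ejoint_def Elog_eta_def Elog_pi_def Elog_omega_def
        Elog_p_V_def Elog_p_pi_def Elog_p_alpha_def Elog_q_u_def Elog_q_V_def Elog_q_alpha_def Elog_q_pi_def)
  ultimately show ?thesis
    unfolding ELBO_decompose gamma_factor_elbo_def by (simp add: algebra_simps)
qed

lemma Elog_omega_update:
  fixes P :: vparams and n a ob i j :: nat and x y :: real
  assumes "1 \<le> j"
  defines "P' \<equiv> P\<lparr>sgm := (sgm P)(n := (sgm P n)(a := (sgm P n a)(ob := (sgm P n a ob)(i := (sgm P n a ob i)(j := x))))),
                   lam := (lam P)(n := (lam P n)(a := (lam P n a)(ob := (lam P n a ob)(i := (lam P n a ob i)(j := y)))))\<rparr>"
  shows "Elog_omega P' n' a' ob' i' j' = Elog_omega P n' a' ob' i' j'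
    + of_bool ((n', a', ob', i') = (n, a, ob, i))
      * (of_bool (j' = j) * (E_beta x y ln - E_beta (sgm P n a ob i j) (lam P n a ob i j) ln)
        + of_bool (j < j') * (E_beta x y (\<lambda>v. ln (1 - v)) - E_beta (sgm P n a ob i j) (lam P n a ob i j) (\<lambda>v. ln (1 - v))))"
proof (cases "(n', a', ob', i') = (n, a, ob, i)")
  case True
  then show ?thesis
    using stick_log_weight_change[OF assms(1),
      of "\<lambda>m. E_beta (sgm P' n a ob i m) (lam P' n a ob i m) ln" "\<lambda>m. E_beta (sgm P n a ob i m) (lam P n a ob i m) ln"
        "\<lambda>m. E_beta (sgm P' n a ob i m) (lam P' n a ob i m) (\<lambda>v. ln (1 - v))"
        "\<lambda>m. E_beta (sgm P n a ob i m) (lam P n a ob i m) (\<lambda>v. ln (1 - v))"]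
    by (simp add: Elog_omega_def P'_def)
next
  case False
  then show ?thesis
    by (auto simp: Elog_omega_def P'_def)
qed


lemma Elog_p_data_update_V:
  fixes P :: vparams and n a ob i j :: nat and x y :: real
  assumes wf: "wf_model M" and n: "n \<in> {1..nAg M}" and j: "j \<in> {1..nZ M n}"
  defines "P' \<equiv> P\<lparr>sgm := (sgm P)(n := (sgm P n)(a := (sgm P n a)(ob := (sgm P n a ob)(i := (sgm P n a ob i)(j := x))))),
                   lam := (lam P)(n := (lam P n)(a := (lam P n a)(ob := (lam P n a ob)(i := (lam P n a ob i)(j := y)))))\<rparr>"
  shows "Elog_p_data M P0 P' = Elog_p_data M P0 P
    + (upd_sgm M P0 n a ob i j - 1) * (E_beta x y ln - E_beta (sgm P n a ob i j) (lam P n a ob i j) ln)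
    + (upd_lam M P0 P n a ob i j - aa P n a ob i / bb P n a ob i)
      * (E_beta x y (\<lambda>v. ln (1 - v)) - E_beta (sgm P n a ob i j) (lam P n a ob i j) (\<lambda>v. ln (1 - v)))"
proof -
  define Lb where "Lb = E_beta x y ln - E_beta (sgm P n a ob i j) (lam P n a ob i j) ln"
  define Lm where "Lm = E_beta x y (\<lambda>v. ln (1 - v)) - E_beta (sgm P n a ob i j) (lam P n a ob i j) (\<lambda>v. ln (1 - v))"
  define c where "c k \<tau> = (if act M k n (\<tau> - 1) = a \<and> obs M k n \<tau> = ob then 1 else 0 :: real)" for k \<tau>
  have om: "Elog_omega P' n' a' ob' i' j' = Elog_omega P n' a' ob' i' j'
      + of_bool ((n', a', ob', i') = (n, a, ob, i)) * (of_bool (j' = j) * Lb + of_bool (j < j') * Lm)"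
    for n' a' ob' i' j'
    unfolding P'_def Lb_def Lm_def using j by (intro Elog_omega_update) simp
  have eta_pi: "Elog_eta P' = Elog_eta P" "Elog_pi M P' = Elog_pi M P"
    by (simp_all add: fun_eq_iff Elog_eta_def Elog_pi_def P'_def)
  have "Ejoint M P' n k t zs = Ejoint M P n k t zs + (\<Sum>\<tau>\<in>{1..t}. c k \<tau>
      * (Lb * of_bool (zs ! (\<tau> - 1) = i \<and> zs ! \<tau> = j) + Lm * of_bool (zs ! (\<tau> - 1) = i \<and> j < zs ! \<tau>)))" for k t zs
  proof -
    have "(\<Sum>\<tau>\<in>{1..t}. Elog_omega P' n (act M k n (\<tau> - 1)) (obs M k n \<tau>) (zs ! (\<tau> - 1)) (zs ! \<tau>))
      = (\<Sum>\<tau>\<in>{1..t}. Elog_omega P n (act M k n (\<tau> - 1)) (obs M k n \<tau>) (zs ! (\<tau> - 1)) (zs ! \<tau>)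
          + c k \<tau> * (Lb * of_bool (zs ! (\<tau> - 1) = i \<and> zs ! \<tau> = j) + Lm * of_bool (zs ! (\<tau> - 1) = i \<and> j < zs ! \<tau>)))"
      by (rule sum.cong) (auto simp: om c_def algebra_simps)
    then show ?thesis
      unfolding Ejoint_def eta_pi by (simp add: sum.distrib)
  qed
  then have "Elog_p_data M P0 P' = Elog_p_data M P0 P + (1 / real (nK M)) * (\<Sum>k\<in>{1..nK M}. \<Sum>t\<le>T M k.
      q_expect M P0 n k t (\<lambda>zs. \<Sum>\<tau>\<in>{1..t}. c k \<tau>
        * (Lb * of_bool (zs ! (\<tau> - 1) = i \<and> zs ! \<tau> = j) + Lm * of_bool (zs ! (\<tau> - 1) = i \<and> j < zs ! \<tau>))))"
    by (intro Elog_p_data_change[OF wf n]) (auto simp: Ejoint_def om eta_pi)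
  also have "\<dots> = Elog_p_data M P0 P + (1 / real (nK M)) * (\<Sum>k\<in>{1..nK M}. \<Sum>t\<le>T M k. \<Sum>\<tau>\<in>{1..t}.
      c k \<tau> * (Lb * qm2 M P0 n k t \<tau> i j + Lm * (\<Sum>m\<in>{j+1..nZ M n}. qm2 M P0 n k t \<tau> i m)))"
    unfolding q_expect_sum q_expect_cmult q_expect_add q_expect_edge_eq
    by (intro arg_cong2[where f = "(+)"] arg_cong2[where f = "(*)"] sum.cong refl)
      (simp only: q_expect_edge_above atLeastAtMost_iff)
  also have "\<dots> = Elog_p_data M P0 P + (upd_sgm M P0 n a ob i j - 1) * Lb
      + (upd_lam M P0 P n a ob i j - aa P n a ob i / bb P n a ob i) * Lm"
    by (simp add: upd_sgm_def upd_lam_def c_def sum.distrib sum_distrib_left sum_distrib_right algebra_simps)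
  finally show ?thesis
    unfolding Lb_def Lm_def .
qed

lemma ELBO_update_V:
  fixes P :: vparams and n a ob i j :: nat and x y :: real
  assumes wf: "wf_model M" and n: "n \<in> {1..nAg M}" and a: "a < nA M n" and ob: "ob < nO M n"
    and i: "i \<in> {1..nZ M n}" and j: "j \<in> {1..nZ M n}"
  defines "P' \<equiv> P\<lparr>sgm := (sgm P)(n := (sgm P n)(a := (sgm P n a)(ob := (sgm P n a ob)(i := (sgm P n a ob i)(j := x))))),
                   lam := (lam P)(n := (lam P n)(a := (lam P n a)(ob := (lam P n a ob)(i := (lam P n a ob i)(j := y)))))\<rparr>"
  shows "ELBO M P0 P' = ELBO M P0 P
    - stick_factor_elbo (upd_sgm M P0 n a ob i j) (upd_lam M P0 P n a ob i j) (aa P n a ob i) (bb P n a ob i)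
        (sgm P n a ob i j) (lam P n a ob i j)
    + stick_factor_elbo (upd_sgm M P0 n a ob i j) (upd_lam M P0 P n a ob i j) (aa P n a ob i) (bb P n a ob i) x y"
proof -
  have "Elog_p_V M P' - Elog_p_V M P = E_stick_prior x y (aa P n a ob i) (bb P n a ob i)
      - E_stick_prior (sgm P n a ob i j) (lam P n a ob i j) (aa P n a ob i) (bb P n a ob i)"
    "Elog_q_V M P' - Elog_q_V M P = E_beta x y (\<lambda>v. ln (beta_pdf x y v))
      - E_beta (sgm P n a ob i j) (lam P n a ob i j) (\<lambda>v. ln (beta_pdf (sgm P n a ob i j) (lam P n a ob i j) v))"
    unfolding Elog_p_V_def Elog_q_V_def using n a ob i j
    by (subst sum5_diff_single[where n' = n and a' = a and b' = ob and c' = i and d' = j]; auto simp: P'_def)+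
  moreover have "Elog_p_u M P' = Elog_p_u M P" "Elog_p_pi M P' = Elog_p_pi M P"
    "Elog_p_rho M P' = Elog_p_rho M P" "Elog_p_alpha M P' = Elog_p_alpha M P"
    "Elog_q_u M P' = Elog_q_u M P" "Elog_q_rho M P' = Elog_q_rho M P"
    "Elog_q_alpha M P' = Elog_q_alpha M P" "Elog_q_pi M P' = Elog_q_pi M P"
    by (simp_all add: P'_def Elog_p_u_def Elog_p_pi_def Elog_p_rho_def Elog_p_alpha_def
        Elog_q_u_def Elog_q_rho_def Elog_q_alpha_def Elog_q_pi_def)
  ultimately show ?thesis
    unfolding ELBO_decompose stick_factor_elbo_def
      Elog_p_data_update_V[OF wf n j, where P = P and a = a and ob = ob and i = i and x = x and y = y
        and P0 = P0, folded P'_def]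
    by (simp add: algebra_simps)
qed

lemma ELBO_update_alpha:
  fixes P :: vparams and n a ob i :: nat and x y :: real
  assumes n: "n \<in> {1..nAg M}" and a: "a < nA M n" and ob: "ob < nO M n" and i: "i \<in> {1..nZ M n}"
  defines "P' \<equiv> P\<lparr>aa := (aa P)(n := (aa P n)(a := (aa P n a)(ob := (aa P n a ob)(i := x)))),
                   bb := (bb P)(n := (bb P n)(a := (bb P n a)(ob := (bb P n a ob)(i := y))))\<rparr>"
  shows "ELBO M P0 P' = ELBO M P0 P
    - gamma_factor_elbo (hc M n a ob) (hd M n a ob) {1..nZ M n} (sgm P n a ob i) (lam P n a ob i)
        (aa P n a ob i) (bb P n a ob i)
    + gamma_factor_elbo (hc M n a ob) (hd M n a ob) {1..nZ M n} (sgm P n a ob i) (lam P n a ob i) x y"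
proof -
  have "Elog_p_V M P' - Elog_p_V M P = (\<Sum>j\<in>{1..nZ M n}. E_stick_prior (sgm P n a ob i j) (lam P n a ob i j) x y)
      - (\<Sum>j\<in>{1..nZ M n}. E_stick_prior (sgm P n a ob i j) (lam P n a ob i j) (aa P n a ob i) (bb P n a ob i))"
    "Elog_p_alpha M P' - Elog_p_alpha M P = E_gamma x y (\<lambda>r. ln (gamma_pdf (hc M n a ob) (hd M n a ob) r))
      - E_gamma (aa P n a ob i) (bb P n a ob i) (\<lambda>r. ln (gamma_pdf (hc M n a ob) (hd M n a ob) r))"
    "Elog_q_alpha M P' - Elog_q_alpha M P = E_gamma x y (\<lambda>r. ln (gamma_pdf x y r))
      - E_gamma (aa P n a ob i) (bb P n a ob i) (\<lambda>r. ln (gamma_pdf (aa P n a ob i) (bb P n a ob i) r))"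
    unfolding Elog_p_V_def Elog_p_alpha_def Elog_q_alpha_def using n a ob i
    by (subst sum4_diff_single[where n' = n and a' = a and b' = ob and c' = i]; auto simp: P'_def)+
  moreover have "Elog_p_data M P0 P' = Elog_p_data M P0 P" "Elog_p_u M P' = Elog_p_u M P"
    "Elog_p_pi M P' = Elog_p_pi M P" "Elog_p_rho M P' = Elog_p_rho M P"
    "Elog_q_u M P' = Elog_q_u M P" "Elog_q_V M P' = Elog_q_V M P"
    "Elog_q_rho M P' = Elog_q_rho M P" "Elog_q_pi M P' = Elog_q_pi M P"
    by (simp_all add: P'_def Elog_p_data_def Ejoint_def Elog_eta_def Elog_pi_def Elog_omega_def
        Elog_p_u_def Elog_p_pi_def Elog_p_rho_def Elog_q_u_def Elog_q_V_def Elog_q_rho_def Elog_q_pi_def)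
  ultimately show ?thesis
    unfolding ELBO_decompose gamma_factor_elbo_def by (simp add: algebra_simps)
qed

definition expected_action_count :: "model \<Rightarrow> vparams \<Rightarrow> nat \<Rightarrow> nat \<Rightarrow> nat \<Rightarrow> real" where
  "expected_action_count M P0 n i b = (\<Sum>k\<in>{1..nK M}. (1 / real (nK M)) * (\<Sum>t\<le>T M k. \<Sum>\<tau>\<le>t.
     qm1 M P0 n k t \<tau> i * (if act M k n \<tau> = b then 1 else 0)))"

lemma expected_action_count_nonneg: "wf_model M \<Longrightarrow> 0 \<le> expected_action_count M P0 n i b"
  unfolding expected_action_count_def by (intro sum_nonneg mult_nonneg_nonneg) (auto intro: qm1_nonneg)

lemma upd_phi_eq:
  "upd_phi M P0 n i = (\<lambda>b\<in>{..<nA M n}. theta M n i b + expected_action_count M P0 n i b)"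
  unfolding upd_phi_def expected_action_count_def ..

lemma Elog_p_data_update_pi:
  fixes P :: vparams and n i :: nat and x :: "nat \<Rightarrow> real"
  assumes wf: "wf_model M" and n: "n \<in> {1..nAg M}"
  defines "P' \<equiv> P\<lparr>phi := (phi P)(n := (phi P n)(i := x))\<rparr>"
  shows "Elog_p_data M P0 P' = Elog_p_data M P0 P + (\<Sum>b<nA M n. expected_action_count M P0 n i b
    * (E_dir x (nA M n) (\<lambda>p. ln (p b)) - E_dir (phi P n i) (nA M n) (\<lambda>p. ln (p b))))"
proof -
  define L where "L b = E_dir x (nA M n) (\<lambda>p. ln (p b)) - E_dir (phi P n i) (nA M n) (\<lambda>p. ln (p b))" for b
  have "Elog_eta P' = Elog_eta P" "Elog_omega P' = Elog_omega P"
    "Elog_pi M P' n' i' b = Elog_pi M P n' i' b + of_bool ((n', i') = (n, i)) * L b" for n' i' b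
    by (auto simp: fun_eq_iff Elog_eta_def Elog_omega_def Elog_pi_def P'_def L_def)
  then have "Elog_p_data M P0 P' = Elog_p_data M P0 P + (1 / real (nK M)) * (\<Sum>k\<in>{1..nK M}. \<Sum>t\<le>T M k.
      q_expect M P0 n k t (\<lambda>zs. \<Sum>\<tau>\<le>t. L (act M k n \<tau>) * of_bool (zs ! \<tau> = i)))"
    by (intro Elog_p_data_change[OF wf n]) (auto simp: Ejoint_def sum.distrib mult.commute)
  also have "\<dots> = Elog_p_data M P0 P + (1 / real (nK M)) * (\<Sum>k\<in>{1..nK M}. \<Sum>t\<le>T M k. \<Sum>\<tau>\<le>t.
      L (act M k n \<tau>) * qm1 M P0 n k t \<tau> i)"
    unfolding q_expect_sum q_expect_cmult q_expect_node_eq ..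
  also have "\<dots> = Elog_p_data M P0 P + (\<Sum>b<nA M n. expected_action_count M P0 n i b * L b)"
  proof -
    have "(\<Sum>b<nA M n. expected_action_count M P0 n i b * L b) = (\<Sum>k\<in>{1..nK M}. \<Sum>t\<le>T M k. \<Sum>\<tau>\<le>t.
        (1 / real (nK M)) * qm1 M P0 n k t \<tau> i * (\<Sum>b<nA M n. (if act M k n \<tau> = b then L b else 0)))"
      unfolding expected_action_count_def
      by (simp add: sum_distrib_left sum_distrib_right sum.swap[where A = "{..<nA M n}"] mult_ac if_distrib
          cong: if_cong)
    also have "\<dots> = (\<Sum>k\<in>{1..nK M}. \<Sum>t\<le>T M k. \<Sum>\<tau>\<le>t. (1 / real (nK M)) * qm1 M P0 n k t \<tau> i * L (act M k n \<tau>))"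
      using wf n by (intro sum.cong refl) (auto simp: wf_model_def)
    finally show ?thesis
      by (simp add: sum_distrib_left mult_ac)
  qed
  finally show ?thesis
    unfolding L_def .
qed

lemma ELBO_update_pi:
  fixes P :: vparams and n i :: nat and x :: "nat \<Rightarrow> real"
  assumes wf: "wf_model M" and n: "n \<in> {1..nAg M}" and i: "i \<in> {1..nZ M n}"
  defines "P' \<equiv> P\<lparr>phi := (phi P)(n := (phi P n)(i := x))\<rparr>"
  shows "ELBO M P0 P' = ELBO M P0 P
    - dirichlet_factor_elbo (theta M n i) (expected_action_count M P0 n i) (nA M n) (phi P n i)
    + dirichlet_factor_elbo (theta M n i) (expected_action_count M P0 n i) (nA M n) x"
proof -
  have "Elog_p_pi M P' - Elog_p_pi M P = E_dir x (nA M n) (\<lambda>p. ln (dir_dens (theta M n i) (nA M n) p))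
      - E_dir (phi P n i) (nA M n) (\<lambda>p. ln (dir_dens (theta M n i) (nA M n) p))"
    "Elog_q_pi M P' - Elog_q_pi M P = E_dir x (nA M n) (\<lambda>p. ln (dir_dens x (nA M n) p))
      - E_dir (phi P n i) (nA M n) (\<lambda>p. ln (dir_dens (phi P n i) (nA M n) p))"
    unfolding Elog_p_pi_def Elog_q_pi_def using n i
    by (subst sum2_diff_single[where n' = n and i' = i]; auto simp: P'_def)+
  moreover have "Elog_p_u M P' = Elog_p_u M P" "Elog_p_V M P' = Elog_p_V M P"
    "Elog_p_rho M P' = Elog_p_rho M P" "Elog_p_alpha M P' = Elog_p_alpha M P"
    "Elog_q_u M P' = Elog_q_u M P" "Elog_q_V M P' = Elog_q_V M P"
    "Elog_q_rho M P' = Elog_q_rho M P" "Elog_q_alpha M P' = Elog_q_alpha M P"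
    by (simp_all add: P'_def Elog_p_u_def Elog_p_V_def Elog_p_rho_def Elog_p_alpha_def
        Elog_q_u_def Elog_q_V_def Elog_q_rho_def Elog_q_alpha_def)
  ultimately show ?thesis
    unfolding ELBO_decompose dirichlet_factor_elbo_def
      Elog_p_data_update_pi[OF wf n, where P = P and i = i and x = x and P0 = P0, folded P'_def]
    by (simp add: algebra_simps sum_subtractf)
qed

lemma is_argmax_ELBO_u:
  assumes wf: "wf_model M" and ok: "vparams_ok M P" and n: "n \<in> {1..nAg M}" and i: "i \<in> {1..nZ M n}"
  shows "is_argmax
      (\<lambda>(x, y). ELBO M P0 (P\<lparr>dlt := (dlt P)(n := (dlt P n)(i := x)), mu := (mu P)(n := (mu P n)(i := y))\<rparr>))
      {(x, y). 0 < x \<and> 0 < y} (upd_dlt M P0 n i, upd_mu M P0 P n i)"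
proof (rule is_argmax_add_const[OF _ is_argmax_stick_factor_elbo])
  show "0 < gg P n" "0 < hh P n"
    using ok n by (auto simp: vparams_ok_def)
  show "1 \<le> upd_dlt M P0 n i" "gg P n / hh P n \<le> upd_mu M P0 P n i"
    unfolding upd_dlt_def upd_mu_def
    by (auto intro!: sum_nonneg divide_nonneg_nonneg qm1_nonneg[OF wf])
qed (auto simp: ELBO_update_u[OF wf n i])

lemma is_argmax_ELBO_V:
  assumes wf: "wf_model M" and ok: "vparams_ok M P" and n: "n \<in> {1..nAg M}" and a: "a < nA M n"
    and ob: "ob < nO M n" and i: "i \<in> {1..nZ M n}" and j: "j \<in> {1..nZ M n}"
  shows "is_argmax
      (\<lambda>(x, y). ELBO M P0 (P\<lparr>sgm := (sgm P)(n := (sgm P n)(a := (sgm P n a)(ob := (sgm P n a ob)(i := (sgm P n a ob i)(j := x))))),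
                              lam := (lam P)(n := (lam P n)(a := (lam P n a)(ob := (lam P n a ob)(i := (lam P n a ob i)(j := y)))))\<rparr>))
      {(x, y). 0 < x \<and> 0 < y} (upd_sgm M P0 n a ob i j, upd_lam M P0 P n a ob i j)"
proof (rule is_argmax_add_const[OF _ is_argmax_stick_factor_elbo])
  show "0 < aa P n a ob i" "0 < bb P n a ob i"
    using ok n a ob i by (auto simp: vparams_ok_def)
  show "1 \<le> upd_sgm M P0 n a ob i j" "aa P n a ob i / bb P n a ob i \<le> upd_lam M P0 P n a ob i j"
    unfolding upd_sgm_def upd_lam_def
    by (auto intro!: sum_nonneg divide_nonneg_nonneg mult_nonneg_nonneg qm2_nonneg[OF wf])
qed (auto simp: ELBO_update_V[OF wf n a ob i j])

lemma is_argmax_ELBO_pi: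
  assumes wf: "wf_model M" and n: "n \<in> {1..nAg M}" and i: "i \<in> {1..nZ M n}"
  shows "is_argmax (\<lambda>x. ELBO M P0 (P\<lparr>phi := (phi P)(n := (phi P n)(i := x))\<rparr>))
      (PiE {..<nA M n} (\<lambda>_. {0<..})) (upd_phi M P0 n i)"
  unfolding upd_phi_eq
proof (rule is_argmax_add_const[OF _ is_argmax_dirichlet_factor_elbo])
  show "1 \<le> nA M n" "\<forall>b<nA M n. 0 < theta M n i b"
    using wf n i by (auto simp: wf_model_def)
  show "\<forall>b<nA M n. 0 \<le> expected_action_count M P0 n i b"
    using expected_action_count_nonneg[OF wf] by blast
qed (simp add: ELBO_update_pi[OF wf n i])

lemma is_argmax_ELBO_rho:
  assumes wf: "wf_model M" and ok: "vparams_ok M P" and n: "n \<in> {1..nAg M}"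
  shows "is_argmax (\<lambda>(x, y). ELBO M P0 (P\<lparr>gg := (gg P)(n := x), hh := (hh P)(n := y)\<rparr>))
      {(x, y). 0 < x \<and> 0 < y} (upd_g M n, upd_h M P n)"
proof -
  have "is_argmax (\<lambda>(x, y). gamma_factor_elbo (he M) (hf M) {1..nZ M n} (dlt P n) (mu P n) x y)
      {(x, y). 0 < x \<and> 0 < y} (upd_g M n, upd_h M P n)"
    unfolding upd_g_def upd_h_def
    using is_argmax_gamma_factor_elbo[of "he M" "hf M" "{1..nZ M n}" "dlt P n" "mu P n"] wf ok n
    by (simp add: wf_model_def vparams_ok_def)
  then show ?thesis
    by (rule is_argmax_add_const[rotated]) (auto simp: ELBO_update_rho[OF n])
qed

lemma is_argmax_ELBO_alpha:
  assumes wf: "wf_model M" and ok: "vparams_ok M P" and n: "n \<in> {1..nAg M}" and a: "a < nA M n"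
    and ob: "ob < nO M n" and i: "i \<in> {1..nZ M n}"
  shows "is_argmax
      (\<lambda>(x, y). ELBO M P0 (P\<lparr>aa := (aa P)(n := (aa P n)(a := (aa P n a)(ob := (aa P n a ob)(i := x)))),
                              bb := (bb P)(n := (bb P n)(a := (bb P n a)(ob := (bb P n a ob)(i := y))))\<rparr>))
      {(x, y). 0 < x \<and> 0 < y} (upd_a M n a ob, upd_b M P n a ob i)"
proof -
  have "is_argmax (\<lambda>(x, y). gamma_factor_elbo (hc M n a ob) (hd M n a ob) {1..nZ M n}
        (sgm P n a ob i) (lam P n a ob i) x y)
      {(x, y). 0 < x \<and> 0 < y} (upd_a M n a ob, upd_b M P n a ob i)"
    unfolding upd_a_def upd_b_def
    using is_argmax_gamma_factor_elbo[of "hc M n a ob" "hd M n a ob" "{1..nZ M n}" "sgm P n a ob i" "lam P n a ob i"]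
      wf ok n a ob i
    by (simp add: wf_model_def vparams_ok_def)
  then show ?thesis
    by (rule is_argmax_add_const[rotated]) (auto simp: ELBO_update_alpha[OF n a ob i])
qed

theorem theorem1:
  fixes M :: model and P0 P :: vparams
  assumes "wf_model M" and "vparams_ok M P0" and "vparams_ok M P"
  shows
   "(\<forall>n\<in>{1..nAg M}. \<forall>i\<in>{1..nZ M n}.
      is_argmax
        (\<lambda>(x, y). ELBO M P0 (P\<lparr>dlt := (dlt P)(n := (dlt P n)(i := x)),
                                mu := (mu P)(n := (mu P n)(i := y))\<rparr>))
        {(x, y). 0 < x \<and> 0 < y}
        (upd_dlt M P0 n i, upd_mu M P0 P n i))
  \<and> (\<forall>n\<in>{1..nAg M}. \<forall>i\<in>{1..nZ M n}.
      is_argmax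
        (\<lambda>x. ELBO M P0 (P\<lparr>phi := (phi P)(n := (phi P n)(i := x))\<rparr>))
        (PiE {..<nA M n} (\<lambda>_. {0<..}))
        (upd_phi M P0 n i))
  \<and> (\<forall>n\<in>{1..nAg M}. \<forall>a<nA M n. \<forall>ob<nO M n. \<forall>i\<in>{1..nZ M n}. \<forall>j\<in>{1..nZ M n}.
      is_argmax
        (\<lambda>(x, y). ELBO M P0 (P\<lparr>sgm := (sgm P)(n := (sgm P n)(a := (sgm P n a)(ob := (sgm P n a ob)(i := (sgm P n a ob i)(j := x))))),
                                lam := (lam P)(n := (lam P n)(a := (lam P n a)(ob := (lam P n a ob)(i := (lam P n a ob i)(j := y)))))\<rparr>))
        {(x, y). 0 < x \<and> 0 < y}
        (upd_sgm M P0 n a ob i j, upd_lam M P0 P n a ob i j))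
  \<and> (\<forall>n\<in>{1..nAg M}.
      is_argmax
        (\<lambda>(x, y). ELBO M P0 (P\<lparr>gg := (gg P)(n := x), hh := (hh P)(n := y)\<rparr>))
        {(x, y). 0 < x \<and> 0 < y}
        (upd_g M n, upd_h M P n))
  \<and> (\<forall>n\<in>{1..nAg M}. \<forall>a<nA M n. \<forall>ob<nO M n. \<forall>i\<in>{1..nZ M n}.
      is_argmax
        (\<lambda>(x, y). ELBO M P0 (P\<lparr>aa := (aa P)(n := (aa P n)(a := (aa P n a)(ob := (aa P n a ob)(i := x)))),
                                bb := (bb P)(n := (bb P n)(a := (bb P n a)(ob := (bb P n a ob)(i := y))))\<rparr>))
        {(x, y). 0 < x \<and> 0 < y}
        (upd_a M n a ob, upd_b M P n a ob i))"
  using is_argmax_ELBO_u[OF assms(1,3)] is_argmax_ELBO_pi[OF assms(1)] is_argmax_ELBO_V[OF assms(1,3)]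
    is_argmax_ELBO_rho[OF assms(1,3)] is_argmax_ELBO_alpha[OF assms(1,3)]
  by blast

end
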